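(* Let $\Gamma$ be a distance-regular graph with classical parameters $(D,b,\alpha,\beta)$ such that $b\ge2$, $b-1\ge\alpha\ge1$ and $D\ge3$, geometric with respect to a set $\mathcal C$ of Delsarte cliques (so $\Gamma$ is the point graph of the partial linear space $(V(\Gamma),\mathcal C,\in)$; members of $\mathcal C$ are called lines). Let $r=[D]$. Assume $\Gamma$ satisfies the dual Pasch axiom. Let $\ell$ be a line, $M$ an assembly and $u$ a vertex not in $M$. Then: (1) if $\ell\cap M\ne\emptyset$, then $|\ell\cap M|=\alpha+1$; (2) if $u$ has a neighbour in $M$, then $u$ has exactly $\alpha+1$ neighbours in $M$ and exactly one line through $u$ intersects $M$. Consequently, for every vertex $x$ the local graph at $x$ is the $\alpha$-clique extension of a $\frac{\beta}{\alpha}\times r$-grid.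
   Context: Distance-regular graph with intersection numbers $b_i,c_i$, valency $k=b_0$. For integer $b\ne1$, $[j]=\frac{b^j-1}{b-1}$. Classical parameters $(D,b,\alpha,\beta)$: diameter $D$, $b_i=([D]-[i])(\beta-\alpha[i])$, $c_i=[i](1+\alpha[i-1])$. A Delsarte clique is a clique with $1+\frac{k}{-\theta_{\min}}$ vertices, $\theta_{\min}$ the smallest adjacency eigenvalue; geometric with respect to $\mathcal C$ means every edge lies in exactly one member of $\mathcal C$. Dual Pasch axiom: for any two adjacent vertices $x,y$, the set of common neighbours of $x$ and $y$ not on the line through $x$ and $y$ is a clique. An assembly is a maximal clique of $\Gamma$ not in $\mathcal C$. The local graph at $x$ is the subgraph induced on the neighbours of $x$. The $m\times n$-grid is $K_m\Box K_n$; the $s$-clique extension of a graph $\Delta$ replaces each vertex $x$ by an $s$-clique $\tilde X$, with $u\in\tilde X$, $v\in\tilde Y$ ($\tilde X\ne\tilde Y$) adjacent iff $x\sim y$ in $\Delta$. *)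

theory Defs
  imports Main "HOL.Real"
begin

definition simple_graph :: "'a set \<Rightarrow> ('a \<Rightarrow> 'a \<Rightarrow> bool) \<Rightarrow> bool" where
  "simple_graph V adj \<longleftrightarrow> finite V \<and> V \<noteq> {} \<and>
     (\<forall>x y. adj x y \<longrightarrow> x \<in> V \<and> y \<in> V) \<and>
     (\<forall>x y. adj x y \<longrightarrow> adj y x) \<and> (\<forall>x. \<not> adj x x)"

fun walk :: "'a set \<Rightarrow> ('a \<Rightarrow> 'a \<Rightarrow> bool) \<Rightarrow> nat \<Rightarrow> 'a \<Rightarrow> 'a \<Rightarrow> bool" where
  "walk V adj 0 x y = (x = y \<and> x \<in> V)"
| "walk V adj (Suc n) x y = (\<exists>z\<in>V. adj x z \<and> walk V adj n z y)"

definition connected_graph :: "'a set \<Rightarrow> ('a \<Rightarrow> 'a \<Rightarrow> bool) \<Rightarrow> bool" where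
  "connected_graph V adj \<longleftrightarrow> (\<forall>x\<in>V. \<forall>y\<in>V. \<exists>n. walk V adj n x y)"

text \<open>Path-length distance (meaningful in a connected graph).\<close>
definition gdist :: "'a set \<Rightarrow> ('a \<Rightarrow> 'a \<Rightarrow> bool) \<Rightarrow> 'a \<Rightarrow> 'a \<Rightarrow> nat" where
  "gdist V adj x y = (LEAST n. walk V adj n x y)"

text \<open>Gaussian integer [j] = (b^j - 1)/(b - 1).\<close>
definition qint :: "int \<Rightarrow> nat \<Rightarrow> real" where
  "qint b j = (real_of_int b ^ j - 1) / (real_of_int b - 1)"

definition classical_drg ::
  "'a set \<Rightarrow> ('a \<Rightarrow> 'a \<Rightarrow> bool) \<Rightarrow> nat \<Rightarrow> int \<Rightarrow> real \<Rightarrow> real \<Rightarrow> bool" where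
  "classical_drg V adj D b \<alpha> \<beta> \<longleftrightarrow>
     simple_graph V adj \<and> connected_graph V adj \<and>
     (\<forall>x\<in>V. \<forall>y\<in>V. gdist V adj x y \<le> D) \<and>
     (\<exists>x\<in>V. \<exists>y\<in>V. gdist V adj x y = D) \<and>
     (\<forall>x\<in>V. \<forall>y\<in>V. \<forall>i. gdist V adj x y = i \<longrightarrow>
        real (card {z\<in>V. adj y z \<and> gdist V adj x z = i + 1})
          = (qint b D - qint b i) * (\<beta> - \<alpha> * qint b i)) \<and>
     (\<forall>x\<in>V. \<forall>y\<in>V. \<forall>i. gdist V adj x y = i \<longrightarrow> 1 \<le> i \<longrightarrow>
        real (card {z\<in>V. adj y z \<and> gdist V adj x z = i - 1})
          = qint b i * (1 + \<alpha> * qint b (i - 1)))"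

definition is_clique :: "'a set \<Rightarrow> ('a \<Rightarrow> 'a \<Rightarrow> bool) \<Rightarrow> 'a set \<Rightarrow> bool" where
  "is_clique V adj C \<longleftrightarrow> C \<subseteq> V \<and> (\<forall>x\<in>C. \<forall>y\<in>C. x \<noteq> y \<longrightarrow> adj x y)"

definition maximal_clique :: "'a set \<Rightarrow> ('a \<Rightarrow> 'a \<Rightarrow> bool) \<Rightarrow> 'a set \<Rightarrow> bool" where
  "maximal_clique V adj C \<longleftrightarrow> is_clique V adj C \<and>
     (\<forall>C'. is_clique V adj C' \<longrightarrow> C \<subseteq> C' \<longrightarrow> C' = C)"

definition adj_eigenvalues :: "'a set \<Rightarrow> ('a \<Rightarrow> 'a \<Rightarrow> bool) \<Rightarrow> real set" where
  "adj_eigenvalues V adj = {ev. \<exists>f :: 'a \<Rightarrow> real. (\<exists>v\<in>V. f v \<noteq> 0) \<and>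
      (\<forall>x\<in>V. (\<Sum>y\<in>V. if adj x y then f y else 0) = ev * f x)}"

definition theta_min :: "'a set \<Rightarrow> ('a \<Rightarrow> 'a \<Rightarrow> bool) \<Rightarrow> real" where
  "theta_min V adj = Min (adj_eigenvalues V adj)"

text \<open>Valency of a regular graph (degree of an arbitrary vertex).\<close>
definition valency :: "'a set \<Rightarrow> ('a \<Rightarrow> 'a \<Rightarrow> bool) \<Rightarrow> nat" where
  "valency V adj = card {y\<in>V. adj (SOME x. x \<in> V) y}"

definition delsarte_clique :: "'a set \<Rightarrow> ('a \<Rightarrow> 'a \<Rightarrow> bool) \<Rightarrow> 'a set \<Rightarrow> bool" where
  "delsarte_clique V adj C \<longleftrightarrow> is_clique V adj C \<and>
     real (card C) = 1 + real (valency V adj) / (- theta_min V adj)"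

definition geometric :: "'a set \<Rightarrow> ('a \<Rightarrow> 'a \<Rightarrow> bool) \<Rightarrow> 'a set set \<Rightarrow> bool" where
  "geometric V adj \<C> \<longleftrightarrow> (\<forall>C\<in>\<C>. delsarte_clique V adj C) \<and>
     (\<forall>x y. adj x y \<longrightarrow> (\<exists>!C. C \<in> \<C> \<and> x \<in> C \<and> y \<in> C))"

definition line_through :: "'a set set \<Rightarrow> 'a \<Rightarrow> 'a \<Rightarrow> 'a set" where
  "line_through \<C> x y = (THE C. C \<in> \<C> \<and> x \<in> C \<and> y \<in> C)"

definition dual_pasch :: "'a set \<Rightarrow> ('a \<Rightarrow> 'a \<Rightarrow> bool) \<Rightarrow> 'a set set \<Rightarrow> bool" where
  "dual_pasch V adj \<C> \<longleftrightarrow> (\<forall>x y. adj x y \<longrightarrow>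
     is_clique V adj {z\<in>V. adj x z \<and> adj y z \<and> z \<notin> line_through \<C> x y})"

definition assembly :: "'a set \<Rightarrow> ('a \<Rightarrow> 'a \<Rightarrow> bool) \<Rightarrow> 'a set set \<Rightarrow> 'a set \<Rightarrow> bool" where
  "assembly V adj \<C> M \<longleftrightarrow> maximal_clique V adj M \<and> M \<notin> \<C>"

definition graph_iso :: "'a set \<Rightarrow> ('a \<Rightarrow> 'a \<Rightarrow> bool) \<Rightarrow> 'b set \<Rightarrow> ('b \<Rightarrow> 'b \<Rightarrow> bool) \<Rightarrow> bool" where
  "graph_iso A adjA B adjB \<longleftrightarrow> (\<exists>f. bij_betw f A B \<and>
     (\<forall>u\<in>A. \<forall>v\<in>A. adjA u v \<longleftrightarrow> adjB (f u) (f v)))"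

definition local_vertices :: "'a set \<Rightarrow> ('a \<Rightarrow> 'a \<Rightarrow> bool) \<Rightarrow> 'a \<Rightarrow> 'a set" where
  "local_vertices V adj x = {y\<in>V. adj x y}"

definition local_adj :: "'a set \<Rightarrow> ('a \<Rightarrow> 'a \<Rightarrow> bool) \<Rightarrow> 'a \<Rightarrow> 'a \<Rightarrow> 'a \<Rightarrow> bool" where
  "local_adj V adj x u v \<longleftrightarrow> u \<in> local_vertices V adj x \<and> v \<in> local_vertices V adj x \<and> adj u v"

definition grid_vertices :: "nat \<Rightarrow> nat \<Rightarrow> (nat \<times> nat) set" where
  "grid_vertices m n = {0..<m} \<times> {0..<n}"

definition grid_adj :: "(nat \<times> nat) \<Rightarrow> (nat \<times> nat) \<Rightarrow> bool" where
  "grid_adj p q \<longleftrightarrow> (fst p = fst q \<and> snd p \<noteq> snd q) \<or> (fst p \<noteq> fst q \<and> snd p = snd q)"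

text \<open>s-clique extension of (W, adjW): each vertex replaced by an s-clique.\<close>
definition cext_vertices :: "nat \<Rightarrow> 'b set \<Rightarrow> ('b \<times> nat) set" where
  "cext_vertices s W = W \<times> {0..<s}"

definition cext_adj :: "('b \<Rightarrow> 'b \<Rightarrow> bool) \<Rightarrow> ('b \<times> nat) \<Rightarrow> ('b \<times> nat) \<Rightarrow> bool" where
  "cext_adj adjW p q \<longleftrightarrow> (fst p = fst q \<and> snd p \<noteq> snd q) \<or> (fst p \<noteq> fst q \<and> adjW (fst p) (fst q))"

end

theory Submission
  imports Defs "HOL-Computational_Algebra.Polynomial"
begin

text \<open>The standard sequence of \<open>\<theta> = -[D]\<close> alternates in sign; by a Sturm-type comparison of
  the three-term recurrence of the distance polynomials this makes \<open>-[D]\<close> the smallest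
  eigenvalue. Hence the Delsarte lines have \<open>\<beta> + 1\<close> points and every vertex lies on \<open>[D]\<close>
  lines. As the vertex-line incidence matrix \<open>N\<close> satisfies \<open>N N\<^sup>T = [D] I + A\<close>, every
  eigenvector for \<open>-[D]\<close> sums to zero on each line; for the radial eigenvector around a vertex
  \<open>y\<close> next to a line \<open>L\<close> this says that \<open>y\<close> has exactly \<open>\<alpha> + 1\<close> neighbours on \<open>L\<close>.
  By the dual Pasch axiom the common neighbours of \<open>x\<close> and \<open>y\<close> off the line \<open>xy\<close> form a
  clique meeting every other line through \<open>x\<close> in \<open>\<alpha>\<close> points. These cliques fit together
  into the rows of a grid on the neighbourhood of \<open>x\<close> whose columns are the lines through
  \<open>x\<close>, every cell having \<open>\<alpha>\<close> points; an assembly through \<open>x\<close> is \<open>x\<close> together with a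
  row, which gives (1) and (2); counting the \<open>[D] \<beta>\<close> neighbours of \<open>x\<close> shows that there
  are \<open>\<beta> / \<alpha>\<close> rows.\<close>

lemma qint_0 [simp]: "qint b 0 = 0"
  by (simp add: qint_def)

lemma qint_Suc: "b \<noteq> 1 \<Longrightarrow> qint b (Suc i) = qint b i + real_of_int b ^ i"
  by (simp add: qint_def field_simps)

lemma qint_1 [simp]: "b \<noteq> 1 \<Longrightarrow> qint b 1 = 1" "b \<noteq> 1 \<Longrightarrow> qint b (Suc 0) = 1"
  by (simp_all add: qint_def)

lemma qint_less: assumes "1 < b" "i < j" shows "qint b i < qint b j"
  using assms(2)
proof (induction j)
  case (Suc j)
  have "qint b j < qint b (Suc j)" using assms(1) by (simp add: qint_Suc)
  with Suc show ?case by (cases "i = j") auto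
qed simp

lemma qint_ge: assumes "1 < b" shows "real i \<le> qint b i"
proof (induction i)
  case (Suc i)
  have "1 \<le> real_of_int b ^ i" using assms by simp
  moreover have "qint b (Suc i) = qint b i + real_of_int b ^ i" using assms by (simp add: qint_Suc)
  ultimately show ?case using Suc by simp
qed simp

lemma clique_adj: "is_clique V adj C \<Longrightarrow> u \<in> C \<Longrightarrow> v \<in> C \<Longrightarrow> u \<noteq> v \<Longrightarrow> adj u v"
  by (simp add: is_clique_def)

lemma comparison_step:
  fixes a b c s t G0 G1 G2 H0 H1 H2 :: real
  assumes G: "c * G2 = (a - s) * G1 - b * G0" and H: "c * H2 = (a - t) * H1 - b * H0"
    and "0 < c" "0 < b" "s < t" "0 < G1" "0 < H1" "H1 * G0 < G1 * H0"
  shows "H2 * G1 < G2 * H1"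
proof -
  have "c * (G2 * H1 - H2 * G1) = (c * G2) * H1 - (c * H2) * G1"
    by (simp add: algebra_simps)
  also have "\<dots> = ((a - s) * G1 - b * G0) * H1 - ((a - t) * H1 - b * H0) * G1"
    by (simp only: G H)
  also have "\<dots> = (t - s) * (G1 * H1) + b * (G1 * H0 - H1 * G0)"
    by (simp add: algebra_simps)
  also have "\<dots> > 0" using assms by (simp add: add_pos_pos)
  finally show ?thesis using \<open>0 < c\<close> by (simp add: zero_less_mult_iff)
qed

lemma positive_by_comparison:
  fixes G0 G1 H0 H1 :: real
  assumes "0 < G0" "0 < H0" "0 < H1" "H1 * G0 < G1 * H0"
  shows "0 < G1"
proof -
  have "0 < G1 * H0" using mult_pos_pos[OF assms(3,1)] assms(4) by linarith
  then show ?thesis using assms(2) by (simp add: zero_less_mult_iff)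
qed

lemma sum_if_const: "finite S \<Longrightarrow> (\<Sum>z\<in>S. if P z then c else 0) = real (card {z\<in>S. P z}) * (c :: real)"
  by (simp add: sum.inter_filter[symmetric])

section \<open>Distance-regular graphs and the smallest eigenvalue\<close>

locale simple_connected_graph =
  fixes V :: "'a set" and adj :: "'a \<Rightarrow> 'a \<Rightarrow> bool"
  assumes simple: "simple_graph V adj"
    and connected: "connected_graph V adj"
begin

abbreviation d :: "'a \<Rightarrow> 'a \<Rightarrow> nat" where "d \<equiv> gdist V adj"

definition sphere :: "'a \<Rightarrow> nat \<Rightarrow> 'a set" where
  "sphere x i = {y\<in>V. d x y = i}"

lemma finite_V: "finite V" and V_nonempty: "V \<noteq> {}"
  using simple by (auto simp: simple_graph_def)

lemma adj_in_V: "adj x y \<Longrightarrow> x \<in> V" "adj x y \<Longrightarrow> y \<in> V"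
  and adj_sym: "adj x y \<Longrightarrow> adj y x"
  and adj_irrefl: "\<not> adj x x"
  using simple by (auto simp: simple_graph_def)

lemma walk_in_V: "walk V adj n x y \<Longrightarrow> x \<in> V"
  by (cases n) (auto intro: adj_in_V)

lemma walk_append: "walk V adj m x y \<Longrightarrow> walk V adj n y z \<Longrightarrow> walk V adj (m + n) x z"
  by (induction m arbitrary: x) auto

lemma walk_split: "walk V adj (m + n) x z \<Longrightarrow> \<exists>y. walk V adj m x y \<and> walk V adj n y z"
proof (induction m arbitrary: x)
  case 0
  then have "x \<in> V" using walk_in_V[of n x z] by simp
  then show ?case using 0 by auto
next
  case (Suc m)
  then obtain x' where "x' \<in> V" "adj x x'" "walk V adj (m + n) x' z" by auto
  then obtain y where "walk V adj m x' y" "walk V adj n y z" using Suc.IH by blast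
  then show ?case using \<open>x' \<in> V\<close> \<open>adj x x'\<close> by auto
qed

lemma walk_dist: "x \<in> V \<Longrightarrow> y \<in> V \<Longrightarrow> walk V adj (d x y) x y"
  using connected unfolding connected_graph_def gdist_def by (meson LeastI_ex)

lemma dist_le_walk: "walk V adj n x y \<Longrightarrow> d x y \<le> n"
  unfolding gdist_def by (rule Least_le)

lemma dist_triangle: "x \<in> V \<Longrightarrow> y \<in> V \<Longrightarrow> z \<in> V \<Longrightarrow> d x z \<le> d x y + d y z"
  by (metis dist_le_walk walk_append walk_dist)

lemma dist_eq_0_iff: "x \<in> V \<Longrightarrow> y \<in> V \<Longrightarrow> d x y = 0 \<longleftrightarrow> x = y"
  using walk_dist[of x y] dist_le_walk[of 0 x x] by fastforce

lemma dist_self [simp]: "x \<in> V \<Longrightarrow> d x x = 0"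
  using dist_eq_0_iff by blast

lemma dist_eq_1_iff: "x \<in> V \<Longrightarrow> y \<in> V \<Longrightarrow> d x y = 1 \<longleftrightarrow> adj x y"
proof
  assume "x \<in> V" "y \<in> V" "d x y = 1"
  then show "adj x y" using walk_dist[of x y] by auto
next
  assume xy: "x \<in> V" "y \<in> V" "adj x y"
  then have "d x y \<le> 1" by (intro dist_le_walk) auto
  moreover have "d x y \<noteq> 0" using xy dist_eq_0_iff adj_irrefl by metis
  ultimately show "d x y = 1" by simp
qed

lemma dist_adj: "adj x y \<Longrightarrow> d x y = 1"
  using dist_eq_1_iff adj_in_V by blast

lemma dist_adj_le: assumes "x \<in> V" "adj y z" shows "d x z \<le> d x y + 1"
  using dist_triangle[OF assms(1) adj_in_V[OF assms(2)]] dist_adj[OF assms(2)] by simp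

lemma dist_le_2: assumes "adj x y" "adj y z" shows "d x z \<le> 2"
  using dist_triangle[OF adj_in_V(1)[OF assms(1)] adj_in_V[OF assms(2)]]
    dist_adj[OF assms(1)] dist_adj[OF assms(2)] by simp

lemma geodesic_edge:
  assumes x: "x \<in> V" and y: "y \<in> V" and i: "i < d x y"
  shows "\<exists>z z'. adj z z' \<and> d x z = i \<and> d x z' = Suc i"
proof -
  define k where "k = d x y - Suc i"
  have dxy: "d x y = i + Suc k" using i by (simp add: k_def)
  then have "walk V adj (i + Suc k) x y" using walk_dist[OF x y] by simp
  then obtain z where z: "walk V adj i x z" and zy: "walk V adj (Suc k) z y"
    using walk_split by blast
  then obtain z' where zz': "adj z z'" and z': "walk V adj k z' y" by auto
  have zV: "z \<in> V" "z' \<in> V" using zz' adj_in_V by auto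
  from zy have "d x y \<le> d x z + Suc k" using dist_triangle[OF x zV(1) y] dist_le_walk by fastforce
  moreover have "d x z \<le> i" using dist_le_walk[OF z] .
  moreover have "walk V adj (i + 1) x z'" using walk_append[OF z, of 1 z'] zz' zV by simp
  then have "d x z' \<le> Suc i" using dist_le_walk by fastforce
  moreover have "d x y \<le> d x z' + k" using dist_triangle[OF x zV(2) y] dist_le_walk[OF z'] by simp
  ultimately show ?thesis using zz' dxy by (intro exI[of _ z] exI[of _ z']) simp
qed

lemma sphere_0: "x \<in> V \<Longrightarrow> sphere x 0 = {x}"
  using dist_eq_0_iff unfolding sphere_def by auto

lemma sphere_nonempty: assumes "x \<in> V" "y \<in> V" "i \<le> d x y" shows "sphere x i \<noteq> {}"
proof (cases "i = d x y")
  case True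
  then show ?thesis using assms unfolding sphere_def by blast
next
  case False
  then have "i < d x y" using assms(3) by simp
  then obtain z z' where "adj z z'" "d x z = i" using geodesic_edge[OF assms(1,2)] by blast
  then show ?thesis using adj_in_V unfolding sphere_def by blast
qed

end

locale distance_regular = simple_connected_graph +
  fixes D :: nat and bi ci :: "nat \<Rightarrow> real"
  assumes dist_le_diameter: "x \<in> V \<Longrightarrow> y \<in> V \<Longrightarrow> d x y \<le> D"
    and diameter_attained: "\<exists>x\<in>V. \<exists>y\<in>V. d x y = D"
    and b_count: "x \<in> V \<Longrightarrow> y \<in> V \<Longrightarrow>
      real (card {z\<in>V. adj y z \<and> d x z = d x y + 1}) = bi (d x y)"
    and c_count: "x \<in> V \<Longrightarrow> y \<in> V \<Longrightarrow> 1 \<le> d x y \<Longrightarrow>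
      real (card {z\<in>V. adj y z \<and> d x z = d x y - 1}) = ci (d x y)"
    and c_0: "ci 0 = 0" \<comment> \<open>a normalisation, not implied by the counting conditions\<close>
begin

definition ai :: "nat \<Rightarrow> real" where
  "ai i = bi 0 - bi i - ci i"

lemma degree: assumes "x \<in> V" shows "real (card {y\<in>V. adj x y}) = bi 0"
proof -
  have "{y\<in>V. adj x y} = {y\<in>V. adj x y \<and> d x y = d x x + 1}" using assms dist_adj by auto
  then show ?thesis using b_count[OF assms assms] assms by simp
qed

lemma card_pos: "z \<in> S \<Longrightarrow> S \<subseteq> V \<Longrightarrow> 0 < real (card S)"
  using finite_V by (auto simp: card_gt_0_iff dest: finite_subset)

lemma b_pos: assumes "i < D" shows "0 < bi i"
proof -
  obtain x y where xy: "x \<in> V" "y \<in> V" "d x y = D" using diameter_attained by blast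
  then obtain z z' where zz': "adj z z'" "d x z = i" "d x z' = Suc i"
    using geodesic_edge assms by metis
  have "0 < real (card {w\<in>V. adj z w \<and> d x w = d x z + 1})"
    using zz' adj_in_V by (intro card_pos[of z']) auto
  then show ?thesis using b_count[OF xy(1) adj_in_V(1)[OF zz'(1)]] zz' by simp
qed

lemma c_pos: assumes "0 < i" "i \<le> D" shows "0 < ci i"
proof -
  obtain x y where xy: "x \<in> V" "y \<in> V" "d x y = D" using diameter_attained by blast
  then obtain z z' where zz': "adj z z'" "d x z = i - 1" "d x z' = i"
    using geodesic_edge[of x y "i - 1"] assms by fastforce
  have "0 < real (card {w\<in>V. adj z' w \<and> d x w = d x z' - 1})"
    using zz' adj_in_V adj_sym by (intro card_pos[of z]) auto
  then show ?thesis using c_count[OF xy(1) adj_in_V(2)[OF zz'(1)]] zz' assms by simp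
qed

lemma c_1: assumes "0 < D" shows "ci 1 = 1"
proof -
  obtain x y where xy: "x \<in> V" "y \<in> V" "d x y = D" using diameter_attained by blast
  then obtain z z' where zz': "adj z z'" "d x z = 0" "d x z' = 1"
    using geodesic_edge[of x y 0] assms by fastforce
  then have "z = x" using dist_eq_0_iff xy(1) adj_in_V by blast
  then have "{w\<in>V. adj z' w \<and> d x w = d x z' - 1} = {x}"
    using zz' xy(1) dist_eq_0_iff adj_sym by auto
  then show ?thesis using c_count[OF xy(1) adj_in_V(2)[OF zz'(1)]] zz' by simp
qed

lemma c_count_Suc: "x \<in> V \<Longrightarrow> y \<in> V \<Longrightarrow>
    real (card {z\<in>V. adj y z \<and> Suc (d x z) = d x y}) = ci (d x y)"
  using c_count[of x y] c_0 by (cases "d x y") (simp_all cong: conj_cong)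

lemma dist_adj_cases:
  assumes "x \<in> V" "adj y z" shows "Suc (d x z) = d x y \<or> d x z = d x y \<or> d x z = Suc (d x y)"
  using dist_adj_le[OF assms] dist_adj_le[OF assms(1) adj_sym[OF assms(2)]] by linarith

lemma a_count: assumes x: "x \<in> V" and y: "y \<in> V"
  shows "real (card {z\<in>V. adj y z \<and> d x z = d x y}) = ai (d x y)"
proof -
  let ?N = "\<lambda>P. {z\<in>V. adj y z \<and> P (d x z)}"
  have "{z\<in>V. adj y z} = ?N (\<lambda>k. Suc k = d x y) \<union> ?N (\<lambda>k. k = d x y) \<union> ?N (\<lambda>k. k = Suc (d x y))"
    using dist_adj_cases[OF x] by blast
  then have "card {z\<in>V. adj y z} =
      card (?N (\<lambda>k. Suc k = d x y)) + card (?N (\<lambda>k. k = d x y)) + card (?N (\<lambda>k. k = Suc (d x y)))"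
    using finite_V by (simp add: card_Un_disjoint disjoint_iff)
  then show ?thesis
    using degree[OF y] c_count_Suc[OF x y] b_count[OF x y] unfolding ai_def by simp
qed

lemma nbr_count: assumes x: "x \<in> V" and y: "y \<in> V"
  shows "real (card {z\<in>V. adj y z \<and> d x z = i}) =
    (if Suc i = d x y then ci (d x y) else 0) + (if i = d x y then ai (d x y) else 0)
    + (if i = Suc (d x y) then bi (d x y) else 0)"
proof -
  consider "Suc i = d x y" | "i = d x y" | "i = Suc (d x y)"
    | "Suc i \<noteq> d x y" "i \<noteq> d x y" "i \<noteq> Suc (d x y)" by blast
  then show ?thesis
  proof cases
    case 1
    then have "{z\<in>V. adj y z \<and> d x z = i} = {z\<in>V. adj y z \<and> Suc (d x z) = d x y}" by auto
    then show ?thesis using 1 c_count_Suc[OF x y] by simp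
  next
    case 2
    then show ?thesis using a_count[OF x y] by simp
  next
    case 3
    then show ?thesis using b_count[OF x y] by simp
  next
    case 4
    then have "{z\<in>V. adj y z \<and> d x z = i} = {}" using dist_adj_cases[OF x] by blast
    then have "card {z\<in>V. adj y z \<and> d x z = i} = 0" by (simp only: card.empty)
    then show ?thesis using 4 by simp
  qed
qed

lemma sum_adj_radial: assumes x: "x \<in> V" and y: "y \<in> V"
  shows "(\<Sum>z\<in>V. if adj y z then g (d x z) else 0) =
    ci (d x y) * g (d x y - 1) + ai (d x y) * g (d x y) + bi (d x y) * g (Suc (d x y))"
proof -
  let ?j = "d x y"
  have "(\<Sum>z\<in>V. if adj y z then g (d x z) else 0) =
      (\<Sum>z\<in>V. (if adj y z \<and> Suc (d x z) = ?j then g (?j - 1) else 0)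
        + (if adj y z \<and> d x z = ?j then g ?j else 0)
        + (if adj y z \<and> d x z = Suc ?j then g (Suc ?j) else 0))"
  proof (rule sum.cong[OF refl])
    fix z assume "z \<in> V"
    show "(if adj y z then g (d x z) else 0) =
        (if adj y z \<and> Suc (d x z) = ?j then g (?j - 1) else 0)
        + (if adj y z \<and> d x z = ?j then g ?j else 0)
        + (if adj y z \<and> d x z = Suc ?j then g (Suc ?j) else 0)"
    proof (cases "adj y z")
      case True
      then consider "d x z = ?j - 1" "0 < ?j" | "d x z = ?j" | "d x z = Suc ?j"
        using dist_adj_cases[OF x] by fastforce
      then show ?thesis using True by cases auto
    qed simp
  qed
  also have "\<dots> = ci ?j * g (?j - 1) + ai ?j * g ?j + bi ?j * g (Suc ?j)"
    using finite_V c_count_Suc[OF x y] a_count[OF x y] b_count[OF x y]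
    by (simp add: sum.distrib sum_if_const)
  finally show ?thesis .
qed

lemma eigenvector_sphere_recurrence:
  assumes x: "x \<in> V" and eig: "\<forall>y\<in>V. (\<Sum>z\<in>V. if adj y z then f z else 0) = t * f y"
  shows "t * sum f (sphere x i) =
    (if i = 0 then 0 else bi (i - 1) * sum f (sphere x (i - 1)))
    + ai i * sum f (sphere x i) + ci (Suc i) * sum f (sphere x (Suc i))"
proof -
  have "t * sum f (sphere x i) = (\<Sum>y\<in>sphere x i. \<Sum>z\<in>V. if adj y z then f z else 0)"
    using eig by (simp add: sum_distrib_left sphere_def)
  also have "\<dots> = (\<Sum>z\<in>V. \<Sum>y\<in>sphere x i. if adj y z then f z else 0)"
    by (rule sum.swap)
  also have "\<dots> = (\<Sum>z\<in>V. real (card {y\<in>V. adj z y \<and> d x y = i}) * f z)"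
  proof (rule sum.cong[OF refl])
    fix z assume "z \<in> V"
    have "{y\<in>sphere x i. adj y z} = {y\<in>V. adj z y \<and> d x y = i}"
      using adj_sym unfolding sphere_def by blast
    then show "(\<Sum>y\<in>sphere x i. if adj y z then f z else 0) =
        real (card {y\<in>V. adj z y \<and> d x y = i}) * f z"
      using finite_V by (simp add: sum_if_const sphere_def)
  qed
  also have "\<dots> = (\<Sum>z\<in>V. (if Suc (d x z) = i then bi (i - 1) * f z else 0)
      + (if d x z = i then ai i * f z else 0) + (if d x z = Suc i then ci (Suc i) * f z else 0))"
    using nbr_count[OF x] by (intro sum.cong) (auto simp: algebra_simps)
  also have "\<dots> = bi (i - 1) * sum f {z\<in>V. Suc (d x z) = i}
      + ai i * sum f (sphere x i) + ci (Suc i) * sum f (sphere x (Suc i))"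
    using finite_V
    by (simp add: sum.distrib sum.inter_filter[symmetric] sum_distrib_left sphere_def)
  also have "{z\<in>V. Suc (d x z) = i} = (if i = 0 then {} else sphere x (i - 1))"
    unfolding sphere_def by auto
  finally show ?thesis by simp
qed

fun dist_poly :: "nat \<Rightarrow> real poly" where
  "dist_poly 0 = 1"
| "dist_poly (Suc 0) = [:0, 1:]"
| "dist_poly (Suc (Suc i)) = smult (1 / ci (Suc (Suc i)))
     ([:- ai (Suc i), 1:] * dist_poly (Suc i) - smult (bi i) (dist_poly i))"

text \<open>The next step of the recurrence, which has to vanish at an eigenvalue because the
  sphere of radius \<open>D + 1\<close> is empty.\<close>

definition eigen_poly :: "real poly" where
  "eigen_poly = [:- ai D, 1:] * dist_poly D - smult (bi (D - 1)) (dist_poly (D - 1))"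

lemma poly_dist_poly_rec:
  assumes "Suc (Suc i) \<le> D"
  shows "ci (Suc (Suc i)) * poly (dist_poly (Suc (Suc i))) t =
    (t - ai (Suc i)) * poly (dist_poly (Suc i)) t - bi i * poly (dist_poly i) t"
  using c_pos[of "Suc (Suc i)"] assms by (simp add: algebra_simps)

lemma poly_eigen_poly:
  "poly eigen_poly t = (t - ai D) * poly (dist_poly D) t - bi (D - 1) * poly (dist_poly (D - 1)) t"
  by (simp add: eigen_poly_def algebra_simps)

lemma coeff_dist_poly: "i \<le> D \<Longrightarrow> 0 < coeff (dist_poly i) i \<and> (\<forall>n>i. coeff (dist_poly i) n = 0)"
proof (induction i rule: dist_poly.induct)
  case (3 i)
  have "[:- ai (Suc i), 1:] * p = smult (- ai (Suc i)) p + pCons 0 p" for p :: "real poly"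
    by simp
  moreover have "0 < ci (Suc (Suc i))" using c_pos 3 by simp
  ultimately show ?case using 3 by (auto simp: coeff_pCons split: nat.splits)
qed (auto simp: coeff_pCons split: nat.splits)

lemma eigen_poly_nonzero: assumes "0 < D" shows "eigen_poly \<noteq> 0"
proof -
  have "[:- ai D, 1:] * p = smult (- ai D) p + pCons 0 p" for p :: "real poly"
    by simp
  then have "coeff eigen_poly (Suc D) = coeff (dist_poly D) D"
    using coeff_dist_poly[of D] coeff_dist_poly[of "D - 1"] assms unfolding eigen_poly_def by simp
  then show ?thesis using coeff_dist_poly[of D] by auto
qed

lemma eigenvector_sphere_sum:
  assumes x: "x \<in> V" and eig: "\<forall>y\<in>V. (\<Sum>z\<in>V. if adj y z then f z else 0) = t * f y"
  shows "i \<le> D \<Longrightarrow> sum f (sphere x i) = poly (dist_poly i) t * f x"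
proof (induction i rule: dist_poly.induct)
  case 1
  then show ?case using sphere_0[OF x] by simp
next
  case 2
  then show ?case
    using eigenvector_sphere_recurrence[OF x eig, of 0] sphere_0[OF x] c_1 by (simp add: ai_def c_0)
next
  case (3 i)
  have "ci (Suc (Suc i)) * sum f (sphere x (Suc (Suc i))) =
      (t - ai (Suc i)) * sum f (sphere x (Suc i)) - bi i * sum f (sphere x i)"
    using eigenvector_sphere_recurrence[OF x eig, of "Suc i"] by (simp add: algebra_simps)
  also have "\<dots> =
      ((t - ai (Suc i)) * poly (dist_poly (Suc i)) t - bi i * poly (dist_poly i) t) * f x"
    using 3 by (simp add: algebra_simps)
  also have "\<dots> = ci (Suc (Suc i)) * (poly (dist_poly (Suc (Suc i))) t * f x)"
    unfolding poly_dist_poly_rec[OF "3.prems", symmetric] by (simp only: mult.assoc)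
  finally have "ci (Suc (Suc i)) * sum f (sphere x (Suc (Suc i))) =
      ci (Suc (Suc i)) * (poly (dist_poly (Suc (Suc i))) t * f x)" .
  moreover have "ci (Suc (Suc i)) \<noteq> 0" using c_pos[of "Suc (Suc i)"] "3.prems" by simp
  ultimately show ?case using mult_left_cancel by blast
qed

lemma eigenvalue_root: assumes "0 < D" and "t \<in> adj_eigenvalues V adj" shows "poly eigen_poly t = 0"
proof -
  obtain f x where eig: "\<forall>y\<in>V. (\<Sum>z\<in>V. if adj y z then f z else 0) = t * f y"
    and x: "x \<in> V" "f x \<noteq> 0"
    using assms(2) unfolding adj_eigenvalues_def by blast
  have "sphere x (Suc D) = {}" using dist_le_diameter[OF x(1)] unfolding sphere_def by fastforce
  then have "t * sum f (sphere x D) =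
      bi (D - 1) * sum f (sphere x (D - 1)) + ai D * sum f (sphere x D)"
    using eigenvector_sphere_recurrence[OF x(1) eig, of D] assms(1) by simp
  moreover have "sum f (sphere x D) = poly (dist_poly D) t * f x"
    and "sum f (sphere x (D - 1)) = poly (dist_poly (D - 1)) t * f x"
    using eigenvector_sphere_sum[OF x(1) eig] by simp_all
  ultimately have "poly eigen_poly t * f x = 0"
    unfolding poly_eigen_poly by (simp add: algebra_simps)
  then show ?thesis using x(2) by simp
qed

lemma finite_adj_eigenvalues: assumes "0 < D" shows "finite (adj_eigenvalues V adj)"
proof (rule finite_subset)
  show "adj_eigenvalues V adj \<subseteq> {t. poly eigen_poly t = 0}"
    using eigenvalue_root[OF assms] by blast
  show "finite {t. poly eigen_poly t = 0}"
    by (rule poly_roots_finite[OF eigen_poly_nonzero[OF assms]])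
qed

definition alt_dist_poly :: "real \<Rightarrow> nat \<Rightarrow> real" where
  "alt_dist_poly s i = (-1) ^ i * poly (dist_poly i) s"

lemma alt_dist_poly_rec:
  assumes "Suc (Suc i) \<le> D"
  shows "ci (Suc (Suc i)) * alt_dist_poly s (Suc (Suc i)) =
    (ai (Suc i) - s) * alt_dist_poly s (Suc i) - bi i * alt_dist_poly s i"
proof -
  have "ci (Suc (Suc i)) * alt_dist_poly s (Suc (Suc i)) =
      (-1) ^ i * (ci (Suc (Suc i)) * poly (dist_poly (Suc (Suc i))) s)"
    unfolding alt_dist_poly_def by (simp del: dist_poly.simps)
  then show ?thesis
    unfolding poly_dist_poly_rec[OF assms] alt_dist_poly_def by (simp add: algebra_simps)
qed

lemma alt_dist_poly_comparison:
  assumes st: "s < t" and pos: "\<And>i. i \<le> D \<Longrightarrow> 0 < alt_dist_poly t i"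
  shows "i < D \<Longrightarrow> 0 < alt_dist_poly s i \<and>
    alt_dist_poly t (Suc i) * alt_dist_poly s i < alt_dist_poly s (Suc i) * alt_dist_poly t i"
proof (induction i)
  case 0
  then show ?case using st by (simp add: alt_dist_poly_def)
next
  case (Suc i)
  then have IH: "0 < alt_dist_poly s i"
    "alt_dist_poly t (Suc i) * alt_dist_poly s i < alt_dist_poly s (Suc i) * alt_dist_poly t i"
    by simp_all
  have Ht: "0 < alt_dist_poly t i" "0 < alt_dist_poly t (Suc i)" using pos Suc.prems by simp_all
  have Gs: "0 < alt_dist_poly s (Suc i)" by (rule positive_by_comparison[OF IH(1) Ht IH(2)])
  have "alt_dist_poly t (Suc (Suc i)) * alt_dist_poly s (Suc i)
      < alt_dist_poly s (Suc (Suc i)) * alt_dist_poly t (Suc i)"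
    using Suc.prems st c_pos[of "Suc (Suc i)"] b_pos[of i] Gs Ht IH
    by (intro comparison_step[OF alt_dist_poly_rec alt_dist_poly_rec]) simp_all
  then show ?case using Gs by simp
qed

lemma eigen_poly_alt:
  assumes "0 < D"
  shows "(-1) ^ Suc D * poly eigen_poly s =
    (ai D - s) * alt_dist_poly s D - bi (D - 1) * alt_dist_poly s (D - 1)"
proof -
  obtain j where "D = Suc j" using assms by (cases D) auto
  then show ?thesis unfolding alt_dist_poly_def poly_eigen_poly by (simp add: algebra_simps)
qed

lemma eigen_poly_no_root_below:
  assumes D: "0 < D" and st: "s < t" and pos: "\<And>i. i \<le> D \<Longrightarrow> 0 < alt_dist_poly t i"
    and root: "poly eigen_poly t = 0"
  shows "poly eigen_poly s \<noteq> 0"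
proof -
  have IH: "0 < alt_dist_poly s (D - 1)"
    "alt_dist_poly t D * alt_dist_poly s (D - 1) < alt_dist_poly s D * alt_dist_poly t (D - 1)"
    using alt_dist_poly_comparison[OF st pos, of "D - 1"] D by simp_all
  have Ht: "0 < alt_dist_poly t (D - 1)" "0 < alt_dist_poly t D" using pos by simp_all
  have Gs: "0 < alt_dist_poly s D" by (rule positive_by_comparison[OF IH(1) Ht IH(2)])
  have eq: "1 * ((-1) ^ Suc D * poly eigen_poly r) =
      (ai D - r) * alt_dist_poly r D - bi (D - 1) * alt_dist_poly r (D - 1)" for r
    using eigen_poly_alt[OF D] by simp
  have "((-1) ^ Suc D * poly eigen_poly t) * alt_dist_poly s D
      < ((-1) ^ Suc D * poly eigen_poly s) * alt_dist_poly t D"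
    by (rule comparison_step[OF eq[of s] eq[of t]])
      (use st b_pos[of "D - 1"] D Gs Ht IH in simp_all)
  then show ?thesis using root by auto
qed

text \<open>If the standard sequence of \<open>t\<close> alternates in sign, then so do the distance polynomials
  at \<open>t\<close> (their values are sphere sizes times the standard sequence), and the comparison
  above shows that \<open>eigen_poly\<close> has no root below \<open>t\<close>.\<close>

lemma theta_min_radial_eigenvector:
  assumes D: "0 < D"
    and rec: "\<And>i. i \<le> D \<Longrightarrow> ci i * g (i - 1) + ai i * g i + bi i * g (Suc i) = t * g i"
    and alt: "\<And>i. i \<le> D \<Longrightarrow> 0 < (-1) ^ i * g i"
  shows "theta_min V adj = t"
proof -
  obtain x y where xy: "x \<in> V" "y \<in> V" "d x y = D" using diameter_attained by blast
  define f where "f z = g (d x z)" for z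
  have eig: "\<forall>z\<in>V. (\<Sum>w\<in>V. if adj z w then f w else 0) = t * f z"
    using sum_adj_radial[OF xy(1)] rec dist_le_diameter[OF xy(1)] unfolding f_def by simp
  have g0: "0 < g 0" using alt[of 0] by simp
  have "f x \<noteq> 0" using g0 xy(1) by (simp add: f_def)
  then have t: "t \<in> adj_eigenvalues V adj"
    unfolding adj_eigenvalues_def using eig xy(1) by blast
  have pos: "0 < alt_dist_poly t i" if i: "i \<le> D" for i
  proof -
    have "sum f (sphere x i) = real (card (sphere x i)) * g i"
      unfolding f_def sphere_def by simp
    then have "alt_dist_poly t i * g 0 = real (card (sphere x i)) * ((-1) ^ i * g i)"
      using eigenvector_sphere_sum[OF xy(1) eig i] xy(1)
      unfolding alt_dist_poly_def by (simp add: f_def algebra_simps)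
    moreover have "0 < real (card (sphere x i))"
      using sphere_nonempty[OF xy(1,2)] xy(3) i finite_V
      by (auto simp: card_gt_0_iff sphere_def)
    ultimately have "0 < alt_dist_poly t i * g 0" using alt[OF i] by simp
    then show ?thesis using g0 by (simp add: zero_less_mult_iff)
  qed
  show ?thesis unfolding theta_min_def
  proof (rule Min_eqI)
    show "finite (adj_eigenvalues V adj)" by (rule finite_adj_eigenvalues[OF D])
    show "t \<le> s" if "s \<in> adj_eigenvalues V adj" for s
      using eigenvalue_root[OF D that] eigen_poly_no_root_below[OF D _ pos eigenvalue_root[OF D t]]
      by force
  qed (rule t)
qed

end

section \<open>Classical parameters\<close>

definition classical_b :: "int \<Rightarrow> nat \<Rightarrow> real \<Rightarrow> real \<Rightarrow> nat \<Rightarrow> real" where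
  "classical_b b D \<alpha> \<beta> i = (qint b D - qint b i) * (\<beta> - \<alpha> * qint b i)"

definition classical_c :: "int \<Rightarrow> real \<Rightarrow> nat \<Rightarrow> real" where
  "classical_c b \<alpha> i = qint b i * (1 + \<alpha> * qint b (i - 1))"

locale classical_distance_regular =
  fixes V :: "'a set" and adj :: "'a \<Rightarrow> 'a \<Rightarrow> bool" and D :: nat and b :: int and \<alpha> \<beta> :: real
  assumes classical: "classical_drg V adj D b \<alpha> \<beta>"
    and b_gt_1: "1 < b" and alpha_nonneg: "0 \<le> \<alpha>" and D_pos: "0 < D"
begin

abbreviation q :: "nat \<Rightarrow> real" where "q \<equiv> qint b"

sublocale distance_regular V adj D "classical_b b D \<alpha> \<beta>" "classical_c b \<alpha>"
  using classical unfolding classical_drg_def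
  by unfold_locales (auto simp: classical_b_def classical_c_def)

lemma q_pos: "0 < i \<Longrightarrow> 0 < q i"
  using qint_less[OF b_gt_1, of 0 i] by simp

lemma alpha_q_less_beta: assumes "i < D" shows "\<alpha> * q i < \<beta>"
proof -
  have "0 < (q D - q i) * (\<beta> - \<alpha> * q i)"
    using b_pos[OF assms] by (simp add: classical_b_def)
  moreover have "0 < q D - q i" using qint_less[OF b_gt_1 assms] by simp
  ultimately show ?thesis by (simp add: zero_less_mult_iff)
qed

lemma beta_pos: "0 < \<beta>"
  using alpha_q_less_beta[OF D_pos] by simp

lemma classical_b_0: "classical_b b D \<alpha> \<beta> 0 = q D * \<beta>"
  by (simp add: classical_b_def)

lemma exists_nbr: assumes "x \<in> V" shows "\<exists>y. adj x y"
proof -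
  have "0 < real (card {y\<in>V. adj x y})"
    using degree[OF assms] classical_b_0 q_pos[OF D_pos] beta_pos by simp
  then have "{y\<in>V. adj x y} \<noteq> {}" by (metis card.empty less_irrefl of_nat_0)
  then show ?thesis by blast
qed

definition std_seq :: "nat \<Rightarrow> real" where
  "std_seq i = (\<Prod>j<i. - (1 + \<alpha> * q j) / (\<beta> - \<alpha> * q j))"

lemma std_seq_Suc: "std_seq (Suc i) = std_seq i * (- (1 + \<alpha> * q i) / (\<beta> - \<alpha> * q i))"
  by (simp add: std_seq_def)

lemma std_seq_b_term:
  assumes "i \<le> D"
  shows "classical_b b D \<alpha> \<beta> i * std_seq (Suc i) = - (q D - q i) * (1 + \<alpha> * q i) * std_seq i"
proof (cases "i = D")
  case False
  then have "\<alpha> * q i < \<beta>" using alpha_q_less_beta assms by simp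
  then have "\<beta> - \<alpha> * q i \<noteq> 0" by simp
  then show ?thesis by (simp add: std_seq_Suc classical_b_def field_simps)
qed (simp add: classical_b_def)

lemma std_seq_c_term:
  assumes "i \<le> D"
  shows "classical_c b \<alpha> i * std_seq (i - 1) = - q i * (\<beta> - \<alpha> * q (i - 1)) * std_seq i"
proof (cases i)
  case (Suc j)
  then have "\<alpha> * q j < \<beta>" using alpha_q_less_beta assms by simp
  then have "\<beta> - \<alpha> * q j \<noteq> 0" by simp
  then show ?thesis using Suc by (simp add: std_seq_Suc classical_c_def field_simps)
qed (simp add: classical_c_def)

lemma std_seq_rec:
  assumes "i \<le> D"
  shows "classical_c b \<alpha> i * std_seq (i - 1) + ai i * std_seq i
    + classical_b b D \<alpha> \<beta> i * std_seq (Suc i) = - q D * std_seq i"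
  unfolding std_seq_b_term[OF assms] std_seq_c_term[OF assms] ai_def
  by (simp add: classical_b_def classical_c_def algebra_simps)

lemma std_seq_alternating: assumes "i \<le> D" shows "0 < (-1) ^ i * std_seq i"
proof -
  have "(-1) ^ i * std_seq i = (\<Prod>j<i. (1 + \<alpha> * q j) / (\<beta> - \<alpha> * q j))"
    unfolding std_seq_def by (induction i) (auto simp: algebra_simps)
  also have "\<dots> > 0"
  proof (intro prod_pos ballI)
    fix j assume "j \<in> {..<i}"
    then have "\<alpha> * q j < \<beta>" using alpha_q_less_beta assms by simp
    moreover have "0 \<le> \<alpha> * q j" using alpha_nonneg qint_ge[OF b_gt_1, of j] by simp
    ultimately show "0 < (1 + \<alpha> * q j) / (\<beta> - \<alpha> * q j)" by simp
  qed
  finally show ?thesis .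
qed

lemma theta_min_classical: "theta_min V adj = - q D"
  using theta_min_radial_eigenvector[OF D_pos std_seq_rec std_seq_alternating] .

lemma std_seq_eigenvector:
  "x \<in> V \<Longrightarrow> y \<in> V \<Longrightarrow> (\<Sum>z\<in>V. if adj y z then std_seq (d x z) else 0) = - q D * std_seq (d x y)"
  using sum_adj_radial std_seq_rec dist_le_diameter by simp

end

section \<open>Geometric graphs\<close>

locale classical_geometric = classical_distance_regular +
  fixes CC :: "'a set set"
  assumes geom: "geometric V adj CC"
begin

abbreviation line :: "'a \<Rightarrow> 'a \<Rightarrow> 'a set" where
  "line x y \<equiv> line_through CC x y"

definition lines_at :: "'a \<Rightarrow> 'a set set" where
  "lines_at x = {L\<in>CC. x \<in> L}"

lemma line_clique: "L \<in> CC \<Longrightarrow> is_clique V adj L"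
  using geom by (simp add: geometric_def delsarte_clique_def)

lemma line_subset: "L \<in> CC \<Longrightarrow> L \<subseteq> V"
  and line_adj: "L \<in> CC \<Longrightarrow> u \<in> L \<Longrightarrow> v \<in> L \<Longrightarrow> u \<noteq> v \<Longrightarrow> adj u v"
  using line_clique by (auto simp: is_clique_def)

lemma finite_line: "L \<in> CC \<Longrightarrow> finite L"
  using line_subset finite_V finite_subset by blast

lemma finite_CC: "finite CC"
  using line_subset finite_V by (intro finite_subset[of CC "Pow V"]) auto

lemma lines_eq_of_common_points:
  assumes "L \<in> CC" "L' \<in> CC" "x \<in> L" "x \<in> L'" "y \<in> L" "y \<in> L'" "x \<noteq> y"
  shows "L = L'"
proof -
  have "adj x y" using line_adj assms by blast
  then have "\<exists>!C. C \<in> CC \<and> x \<in> C \<and> y \<in> C" using geom by (simp add: geometric_def)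
  then show ?thesis using assms by blast
qed

lemma line_through_props: assumes "adj x y" shows "line x y \<in> CC \<and> x \<in> line x y \<and> y \<in> line x y"
proof -
  have "\<exists>!C. C \<in> CC \<and> x \<in> C \<and> y \<in> C" using geom assms by (simp add: geometric_def)
  then show ?thesis unfolding line_through_def by (rule theI')
qed

lemma line_through_eq: "adj x y \<Longrightarrow> L \<in> CC \<Longrightarrow> x \<in> L \<Longrightarrow> y \<in> L \<Longrightarrow> line x y = L"
  using line_through_props[of x y] lines_eq_of_common_points[of "line x y" L x y] adj_irrefl
  by blast

lemma valency_eq: "real (valency V adj) = q D * \<beta>"
proof -
  have "(SOME x. x \<in> V) \<in> V" using V_nonempty by (simp add: some_in_eq)
  then show ?thesis unfolding valency_def using degree classical_b_0 by simp
qed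

lemma line_card: assumes "L \<in> CC" shows "real (card L) = \<beta> + 1"
proof -
  have "real (card L) = 1 + q D * \<beta> / q D"
    using geom assms unfolding geometric_def delsarte_clique_def theta_min_classical valency_eq
    by simp
  then show ?thesis using q_pos[OF D_pos] by simp
qed

lemma nbrs_eq_Union_lines: "{y\<in>V. adj x y} = (\<Union>L\<in>lines_at x. L - {x})"
proof
  show "{y\<in>V. adj x y} \<subseteq> (\<Union>L\<in>lines_at x. L - {x})"
    using line_through_props adj_irrefl unfolding lines_at_def by blast
  show "(\<Union>L\<in>lines_at x. L - {x}) \<subseteq> {y\<in>V. adj x y}"
    using line_adj line_subset unfolding lines_at_def by blast
qed

lemma card_lines_at: assumes x: "x \<in> V" shows "real (card (lines_at x)) = q D"
proof -
  have "card {y\<in>V. adj x y} = (\<Sum>L\<in>lines_at x. card (L - {x}))"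
    unfolding nbrs_eq_Union_lines
  proof (rule card_UN_disjoint)
    show "finite (lines_at x)" using finite_CC by (simp add: lines_at_def)
    show "\<forall>L\<in>lines_at x. finite (L - {x})" using finite_line by (simp add: lines_at_def)
    show "\<forall>L\<in>lines_at x. \<forall>L'\<in>lines_at x. L \<noteq> L' \<longrightarrow> (L - {x}) \<inter> (L' - {x}) = {}"
      unfolding lines_at_def using lines_eq_of_common_points by blast
  qed
  also have "\<dots> = (\<Sum>L\<in>lines_at x. card L - 1)"
    using finite_line by (intro sum.cong) (auto simp: lines_at_def card_Diff_singleton)
  finally have "q D * \<beta> = (\<Sum>L\<in>lines_at x. real (card L - 1))"
    using degree[OF x] classical_b_0 by simp
  also have "\<dots> = (\<Sum>L\<in>lines_at x. \<beta>)"
  proof (rule sum.cong[OF refl])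
    fix L assume "L \<in> lines_at x"
    then have L: "L \<in> CC" "x \<in> L" by (auto simp: lines_at_def)
    then have "1 \<le> card L" using finite_line[OF L(1)]
      by (metis One_nat_def Suc_leI card_gt_0_iff empty_iff)
    then show "real (card L - 1) = \<beta>" using line_card[OF L(1)] by (simp add: of_nat_diff)
  qed
  finally show ?thesis using beta_pos by simp
qed

lemma card_lines_through_pair:
  assumes "z \<in> V" "z' \<in> V"
  shows "real (card {L\<in>CC. z \<in> L \<and> z' \<in> L}) = (if z = z' then q D else if adj z z' then 1 else 0)"
proof -
  consider "z = z'" | "adj z z'" | "z \<noteq> z'" "\<not> adj z z'" by blast
  then show ?thesis
  proof cases
    case 1
    then show ?thesis using card_lines_at[OF assms(1)] by (simp add: lines_at_def)
  next
    case 2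
    then have "{L\<in>CC. z \<in> L \<and> z' \<in> L} = {line z z'}"
      using line_through_props line_through_eq by blast
    then show ?thesis using 2 adj_irrefl by auto
  next
    case 3
    then have "{L\<in>CC. z \<in> L \<and> z' \<in> L} = {}" using line_adj by blast
    then have "card {L\<in>CC. z \<in> L \<and> z' \<in> L} = 0" by (simp only: card.empty)
    then show ?thesis using 3 by simp
  qed
qed

text \<open>The vertex-line incidence matrix \<open>N\<close> satisfies \<open>N N\<^sup>T = [D] I + A\<close>.\<close>

lemma sum_lines_square:
  "(\<Sum>L\<in>CC. (sum f L)\<^sup>2) =
    q D * (\<Sum>z\<in>V. (f z)\<^sup>2) + (\<Sum>z\<in>V. \<Sum>z'\<in>V. if adj z z' then f z * f z' else 0)"
proof -
  have square: "(sum f L)\<^sup>2 = (\<Sum>z\<in>V. \<Sum>z'\<in>V. if z \<in> L \<and> z' \<in> L then f z * f z' else 0)"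
    if "L \<in> CC" for L
  proof -
    have "sum f L = (\<Sum>z\<in>V. if z \<in> L then f z else 0)"
      using sum.inter_restrict[OF finite_V, of f L] line_subset[OF that] by (simp add: Int_absorb1)
    then have "(sum f L)\<^sup>2 = (\<Sum>z\<in>V. if z \<in> L then f z else 0) * (\<Sum>z'\<in>V. if z' \<in> L then f z' else 0)"
      by (simp add: power2_eq_square)
    also have "\<dots> = (\<Sum>z\<in>V. \<Sum>z'\<in>V. if z \<in> L \<and> z' \<in> L then f z * f z' else 0)"
      unfolding sum_product by (intro sum.cong refl) auto
    finally show ?thesis .
  qed
  have "(\<Sum>L\<in>CC. (sum f L)\<^sup>2) = (\<Sum>L\<in>CC. \<Sum>z\<in>V. \<Sum>z'\<in>V. if z \<in> L \<and> z' \<in> L then f z * f z' else 0)"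
    using square by simp
  also have "\<dots> = (\<Sum>z\<in>V. \<Sum>z'\<in>V. \<Sum>L\<in>CC. if z \<in> L \<and> z' \<in> L then f z * f z' else 0)"
    by (subst sum.swap) (rule sum.cong[OF refl], rule sum.swap)
  also have "\<dots> = (\<Sum>z\<in>V. \<Sum>z'\<in>V. real (card {L\<in>CC. z \<in> L \<and> z' \<in> L}) * (f z * f z'))"
    using finite_CC by (simp add: sum_if_const)
  also have "\<dots> = (\<Sum>z\<in>V. \<Sum>z'\<in>V.
      (if z' = z then q D * (f z)\<^sup>2 else 0) + (if adj z z' then f z * f z' else 0))"
    using card_lines_through_pair adj_irrefl by (intro sum.cong refl) (auto simp: power2_eq_square)
  also have "\<dots> = q D * (\<Sum>z\<in>V. (f z)\<^sup>2) + (\<Sum>z\<in>V. \<Sum>z'\<in>V. if adj z z' then f z * f z' else 0)"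
    using finite_V by (simp add: sum.distrib sum_distrib_left)
  finally show ?thesis .
qed

lemma line_sum_zero:
  assumes eig: "\<forall>y\<in>V. (\<Sum>z\<in>V. if adj y z then f z else 0) = - q D * f y" and L: "L \<in> CC"
  shows "sum f L = 0"
proof -
  have "(\<Sum>z'\<in>V. if adj z z' then f z * f z' else 0) = - q D * (f z)\<^sup>2" if "z \<in> V" for z
  proof -
    have "(\<Sum>z'\<in>V. if adj z z' then f z * f z' else 0) = f z * (\<Sum>z'\<in>V. if adj z z' then f z' else 0)"
      unfolding sum_distrib_left by (intro sum.cong) auto
    then show ?thesis using eig that by (simp add: power2_eq_square)
  qed
  then have "(\<Sum>L\<in>CC. (sum f L)\<^sup>2) = 0"
    unfolding sum_lines_square by (simp add: sum_negf sum_distrib_left)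
  then have "\<forall>L\<in>CC. (sum f L)\<^sup>2 = 0"
    using sum_nonneg_eq_0_iff[OF finite_CC, of "\<lambda>L. (sum f L)\<^sup>2"] by simp
  then show ?thesis using L by simp
qed

lemma dist_to_line:
  assumes L: "L \<in> CC" "x \<in> L" and xy: "adj x y" and y: "y \<notin> L" and z: "z \<in> L"
  shows "d y z = (if adj y z then 1 else 2)"
proof (cases "adj y z")
  case False
  have yV: "y \<in> V" using adj_in_V xy by simp
  have zV: "z \<in> V" using z line_subset L by blast
  have "z \<noteq> x" using False adj_sym[OF xy] by auto
  then have "d y z \<le> 2" using dist_le_2[OF adj_sym[OF xy]] line_adj L z by blast
  moreover have "d y z \<noteq> 0" using dist_eq_0_iff[OF yV zV] y z by auto
  moreover have "d y z \<noteq> 1" using dist_eq_1_iff[OF yV zV] False by auto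
  ultimately show ?thesis using False by simp
qed (simp add: dist_adj)

text \<open>The eigenvector \<open>std_seq (d y \<cdot>)\<close> sums to zero on \<open>L\<close>, where it takes the value
  \<open>std_seq 1\<close> at the neighbours of \<open>y\<close> and \<open>std_seq 2\<close> elsewhere.\<close>

lemma line_nbr_count:
  assumes D: "1 < D" and L: "L \<in> CC" "x \<in> L" and xy: "adj x y" and y: "y \<notin> L"
  shows "real (card {z\<in>L. adj y z}) = \<alpha> + 1"
proof -
  let ?n = "real (card {z\<in>L. adj y z})"
  have yV: "y \<in> V" using adj_in_V xy by simp
  have dist: "d y z = (if adj y z then 1 else 2)" if "z \<in> L" for z
    using dist_to_line L xy y that by simp
  have "0 = (\<Sum>z\<in>L. std_seq (d y z))"
    using line_sum_zero[OF _ L(1)] std_seq_eigenvector[OF yV] by simp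
  also have "\<dots> = (\<Sum>z\<in>L. std_seq 2 + (if adj y z then std_seq 1 - std_seq 2 else 0))"
    using dist by (intro sum.cong) auto
  also have "\<dots> = (\<beta> + 1) * std_seq 2 + ?n * (std_seq 1 - std_seq 2)"
    using finite_line[OF L(1)] line_card[OF L(1)] by (simp add: sum.distrib sum_if_const)
  finally have sum0: "(\<beta> + 1) * std_seq 2 + ?n * (std_seq 1 - std_seq 2) = 0" by simp
  have \<beta>: "0 < \<beta>" "0 < \<beta> - \<alpha>" using beta_pos alpha_q_less_beta[OF D] b_gt_1 by auto
  define P where "P = \<beta> * (\<beta> - \<alpha>)"
  have P: "0 < P" using \<beta> by (simp add: P_def)
  have u1: "std_seq 1 = - (\<beta> - \<alpha>) / P" using \<beta> by (simp add: std_seq_def P_def field_simps)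
  have u2: "std_seq 2 = (1 + \<alpha>) / P"
    using b_gt_1 \<beta> by (simp add: std_seq_def numeral_2_eq_2 P_def field_simps)
  have "(\<beta> + 1) * std_seq 2 + ?n * (std_seq 1 - std_seq 2) = (\<beta> + 1) * (1 + \<alpha> - ?n) / P"
    unfolding u1 u2 using P by (simp add: field_simps)
  then have "(\<beta> + 1) * (1 + \<alpha> - ?n) = 0" using sum0 P by simp
  then show ?thesis using \<beta> by simp
qed

end

section \<open>Clique extensions of grids\<close>

lemma exists_cell_labelling:
  fixes row :: "'a \<Rightarrow> 'r" and col :: "'a \<Rightarrow> 'c"
  assumes fin: "finite W"
    and cell: "\<And>u v. u \<in> W \<Longrightarrow> v \<in> W \<Longrightarrow> card {w\<in>W. row w = row u \<and> col w = col v} = s"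
  shows "\<exists>h. \<forall>u\<in>W. \<forall>v\<in>W. bij_betw h {w\<in>W. row w = row u \<and> col w = col v} {0..<s}"
proof -
  define C where "C a c = {w\<in>W. row w = a \<and> col w = c}" for a c
  define g where "g a c = (SOME g. bij_betw g (C a c) {0..<s})" for a c
  have g: "bij_betw (g (row u) (col v)) (C (row u) (col v)) {0..<s}" if "u \<in> W" "v \<in> W" for u v
  proof -
    have "\<exists>g. bij_betw g (C (row u) (col v)) {0..<s}"
      using cell[OF that] fin ex_bij_betw_finite_nat[of "C (row u) (col v)"] by (simp add: C_def)
    then show ?thesis unfolding g_def by (rule someI_ex)
  qed
  have "bij_betw (\<lambda>w. g (row w) (col w) w) (C (row u) (col v)) {0..<s}" if "u \<in> W" "v \<in> W" for u v
    using g[OF that] by (rule bij_betw_cong[THEN iffD1, rotated]) (simp add: C_def)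
  then show ?thesis unfolding C_def by blast
qed

lemma graph_iso_clique_extension_grid:
  fixes row :: "'a \<Rightarrow> 'r" and col :: "'a \<Rightarrow> 'c"
  assumes fin: "finite W"
    and adj_iff: "\<And>u v. u \<in> W \<Longrightarrow> v \<in> W \<Longrightarrow> adjW u v \<longleftrightarrow> u \<noteq> v \<and> (row u = row v \<or> col u = col v)"
    and cell: "\<And>u v. u \<in> W \<Longrightarrow> v \<in> W \<Longrightarrow> card {w\<in>W. row w = row u \<and> col w = col v} = s"
  shows "graph_iso W adjW
    (cext_vertices s (grid_vertices (card (row ` W)) (card (col ` W)))) (cext_adj grid_adj)"
proof -
  let ?m = "card (row ` W)" and ?n = "card (col ` W)"
  obtain er where er: "bij_betw er (row ` W) {0..<?m}" using ex_bij_betw_finite_nat fin by blast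
  obtain ec where ec: "bij_betw ec (col ` W) {0..<?n}" using ex_bij_betw_finite_nat fin by blast
  obtain h where h: "\<And>u v. u \<in> W \<Longrightarrow> v \<in> W \<Longrightarrow> bij_betw h {w\<in>W. row w = row u \<and> col w = col v} {0..<s}"
    using exists_cell_labelling[OF fin cell] by blast
  define f where "f w = ((er (row w), ec (col w)), h w)" for w
  have er_eq: "er (row u) = er (row v) \<longleftrightarrow> row u = row v" if "u \<in> W" "v \<in> W" for u v
    using inj_on_eq_iff[OF bij_betw_imp_inj_on[OF er]] that by blast
  have ec_eq: "ec (col u) = ec (col v) \<longleftrightarrow> col u = col v" if "u \<in> W" "v \<in> W" for u v
    using inj_on_eq_iff[OF bij_betw_imp_inj_on[OF ec]] that by blast
  have h_eq: "h u = h v \<longleftrightarrow> u = v" if "u \<in> W" "v \<in> W" "row u = row v" "col u = col v" for u v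
    using inj_on_eq_iff[OF bij_betw_imp_inj_on[OF h[of u u]]] that by auto
  have f_eq: "f u = f v \<longleftrightarrow> u = v" if "u \<in> W" "v \<in> W" for u v
    using er_eq[OF that] ec_eq[OF that] h_eq[OF that] by (auto simp: f_def)
  have "f ` W = cext_vertices s (grid_vertices ?m ?n)"
  proof
    show "f ` W \<subseteq> cext_vertices s (grid_vertices ?m ?n)"
    proof
      fix p assume "p \<in> f ` W"
      then obtain w where w: "w \<in> W" "p = f w" by blast
      have "er (row w) < ?m" using bij_betw_apply[OF er] w(1) by simp
      moreover have "ec (col w) < ?n" using bij_betw_apply[OF ec] w(1) by simp
      moreover have "h w < s" using bij_betw_apply[OF h[OF w(1) w(1)]] w(1) by simp
      ultimately show "p \<in> cext_vertices s (grid_vertices ?m ?n)"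
        unfolding w(2) f_def cext_vertices_def grid_vertices_def by simp
    qed
    show "cext_vertices s (grid_vertices ?m ?n) \<subseteq> f ` W"
    proof
      fix p assume "p \<in> cext_vertices s (grid_vertices ?m ?n)"
      then obtain i j t where p: "p = ((i, j), t)" "i < ?m" "j < ?n" "t < s"
        unfolding cext_vertices_def grid_vertices_def by auto
      have "i \<in> er ` row ` W" using bij_betw_imp_surj_on[OF er] p(2) by simp
      then obtain u where u: "u \<in> W" "er (row u) = i" by blast
      have "j \<in> ec ` col ` W" using bij_betw_imp_surj_on[OF ec] p(3) by simp
      then obtain v where v: "v \<in> W" "ec (col v) = j" by blast
      have "t \<in> h ` {w\<in>W. row w = row u \<and> col w = col v}"
        using bij_betw_imp_surj_on[OF h[OF u(1) v(1)]] p(4) by simp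
      then obtain w where w: "w \<in> W" "row w = row u" "col w = col v" "h w = t" by blast
      then have "f w = p" using u v p(1) by (simp add: f_def)
      then show "p \<in> f ` W" using w(1) by blast
    qed
  qed
  moreover have "inj_on f W" using f_eq by (intro inj_onI) blast
  moreover have "adjW u v \<longleftrightarrow> cext_adj grid_adj (f u) (f v)" if "u \<in> W" "v \<in> W" for u v
    using adj_iff[OF that] er_eq[OF that] ec_eq[OF that] h_eq[OF that]
    unfolding f_def cext_adj_def grid_adj_def by auto
  ultimately show ?thesis unfolding graph_iso_def bij_betw_def by blast
qed

section \<open>The dual Pasch axiom and the local grid\<close>

locale dual_pasch_geometric = classical_geometric +
  assumes pasch: "dual_pasch V adj CC"
    and alpha_pos: "0 < \<alpha>" and D_gt_1: "1 < D"
begin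

definition pasch_clique :: "'a \<Rightarrow> 'a \<Rightarrow> 'a set" where
  "pasch_clique x y = {z\<in>V. adj x z \<and> adj y z \<and> z \<notin> line x y}"

lemma mem_pasch_clique: "z \<in> pasch_clique x y \<longleftrightarrow> z \<in> V \<and> adj x z \<and> adj y z \<and> z \<notin> line x y"
  by (simp add: pasch_clique_def)

lemma pasch_clique_adj: "adj x y \<Longrightarrow> u \<in> pasch_clique x y \<Longrightarrow> v \<in> pasch_clique x y \<Longrightarrow> u \<noteq> v \<Longrightarrow> adj u v"
  using pasch unfolding dual_pasch_def is_clique_def pasch_clique_def by blast

lemma line_through_neq: "adj x c \<Longrightarrow> c \<notin> line x y \<Longrightarrow> line x c \<noteq> line x y"
  using line_through_props[of x c] by auto

lemma three_le_q_D: "3 \<le> q D"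
proof -
  have "q 2 = 1 + real_of_int b" using b_gt_1 by (simp add: numeral_2_eq_2 qint_Suc)
  moreover have "q 2 \<le> q D" using qint_less[OF b_gt_1, of 2 D] D_gt_1 by (cases "D = 2") auto
  ultimately show ?thesis using b_gt_1 by simp
qed

lemma third_line: assumes "x \<in> V" shows "\<exists>L\<in>lines_at x. L \<noteq> L1 \<and> L \<noteq> L2"
proof (rule ccontr)
  assume "\<not> ?thesis"
  then have "card (lines_at x) \<le> card {L1, L2}" by (intro card_mono) auto
  also have "\<dots> \<le> 2" by (simp add: card_insert_le_m1)
  finally show False using card_lines_at[OF assms] three_le_q_D by simp
qed

lemma card_pasch_clique_line:
  assumes xy: "adj x y" and L: "L \<in> CC" "x \<in> L" "L \<noteq> line x y"
  shows "real (card (pasch_clique x y \<inter> L)) = \<alpha>"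
proof -
  have yL: "y \<notin> L" using line_through_eq[OF xy L(1,2)] L(3) by auto
  have "pasch_clique x y \<inter> L = {z\<in>L. adj y z} - {x}"
  proof
    show "pasch_clique x y \<inter> L \<subseteq> {z\<in>L. adj y z} - {x}"
      using adj_irrefl by (auto simp: mem_pasch_clique)
    show "{z\<in>L. adj y z} - {x} \<subseteq> pasch_clique x y \<inter> L"
    proof
      fix u assume u: "u \<in> {z\<in>L. adj y z} - {x}"
      then have xu: "adj x u" using line_adj[OF L(1,2)] by auto
      have "u \<notin> line x y"
      proof
        assume "u \<in> line x y"
        then have "L = line x y"
          using lines_eq_of_common_points[of L "line x y" x u] L(1,2) line_through_props[OF xy] u
          by auto
        then show False using L(3) by simp
      qed
      then show "u \<in> pasch_clique x y \<inter> L" using u xu adj_in_V by (auto simp: mem_pasch_clique)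
    qed
  qed
  moreover have "x \<in> {z\<in>L. adj y z}" using L xy adj_sym by auto
  then have "Suc (card ({z\<in>L. adj y z} - {x})) = card {z\<in>L. adj y z}"
    using finite_line[OF L(1)] by (intro card_Suc_Diff1) auto
  ultimately show ?thesis
    using line_nbr_count[OF D_gt_1 L(1,2) xy yL] by simp
qed

lemma pasch_clique_line_nonempty:
  assumes "adj x y" "L \<in> CC" "x \<in> L" "L \<noteq> line x y"
  shows "pasch_clique x y \<inter> L \<noteq> {}"
proof
  assume "pasch_clique x y \<inter> L = {}"
  then show False using card_pasch_clique_line[OF assms] alpha_pos by simp
qed

lemma pasch_clique_nonempty: assumes xy: "adj x y" shows "pasch_clique x y \<noteq> {}"
proof -
  obtain L where "L \<in> lines_at x" "L \<noteq> line x y" using third_line adj_in_V(1)[OF xy] by blast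
  then show ?thesis using pasch_clique_line_nonempty[OF xy, of L] unfolding lines_at_def by blast
qed

lemma pasch_clique_sym:
  assumes xy: "adj x y" and c: "c \<in> pasch_clique x y" shows "y \<in> pasch_clique x c"
proof -
  have xc: "adj x c" and "c \<notin> line x y" using c by (auto simp: mem_pasch_clique)
  then have "y \<notin> line x c" using line_through_eq[OF xy, of "line x c"] line_through_props[OF xc]
    by auto
  then show ?thesis using xy c adj_in_V adj_sym by (auto simp: mem_pasch_clique)
qed

lemma pasch_clique_trace:
  assumes xy: "adj x y" and c: "c \<in> pasch_clique x y"
    and L: "L \<in> CC" "x \<in> L" "L \<noteq> line x y" "L \<noteq> line x c"
  shows "pasch_clique x c \<inter> L = pasch_clique x y \<inter> L"
proof -
  have xc: "adj x c" using c by (simp add: mem_pasch_clique)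
  have "pasch_clique x y \<inter> L \<subseteq> pasch_clique x c \<inter> L"
  proof
    fix v assume v: "v \<in> pasch_clique x y \<inter> L"
    then have xv: "adj x v" by (simp add: mem_pasch_clique)
    have "v \<noteq> c" using v L(4) line_through_eq[OF xc L(1,2)] by auto
    then have "adj c v" using pasch_clique_adj[OF xy c] v by blast
    moreover have "v \<notin> line x c"
    proof
      assume "v \<in> line x c"
      then have "L = line x c"
        using lines_eq_of_common_points[of L "line x c" x v] L(1,2) line_through_props[OF xc]
          v xv adj_irrefl by auto
      then show False using L(4) by simp
    qed
    ultimately show "v \<in> pasch_clique x c \<inter> L" using v by (auto simp: mem_pasch_clique)
  qed
  moreover have "card (pasch_clique x y \<inter> L) = card (pasch_clique x c \<inter> L)"
    using card_pasch_clique_line[OF xy L(1-3)] card_pasch_clique_line[OF xc L(1,2,4)] by simp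
  moreover have "finite (pasch_clique x c \<inter> L)" using finite_line[OF L(1)] by simp
  ultimately show ?thesis using card_subset_eq by metis
qed

lemma pasch_trace_on_line_indep:
  assumes xy: "adj x y" and c: "c \<in> pasch_clique x y" and c': "c' \<in> pasch_clique x y"
  shows "pasch_clique x c \<inter> line x y = pasch_clique x c' \<inter> line x y"
proof -
  have x: "x \<in> V" using adj_in_V xy by simp
  have lines: "adj x e \<and> line x e \<in> CC \<and> x \<in> line x e \<and> e \<in> line x e \<and> line x e \<noteq> line x y"
    if "e \<in> pasch_clique x y" for e
    using that line_through_props line_through_neq by (auto simp: mem_pasch_clique)
  have on_distinct_lines: "pasch_clique x e \<inter> line x y = pasch_clique x e' \<inter> line x y"
    if e: "e \<in> pasch_clique x y" and e': "e' \<in> pasch_clique x y"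
      and ne: "line x e \<noteq> line x e'" for e e'
  proof -
    have "e' \<in> pasch_clique x y \<inter> line x e'" using e' lines by blast
    also have "\<dots> = pasch_clique x e \<inter> line x e'"
      using pasch_clique_trace[OF xy e, of "line x e'"] lines[OF e'] ne by simp
    finally have e'e: "e' \<in> pasch_clique x e" by simp
    show ?thesis
      using pasch_clique_trace[OF lines[THEN conjunct1, OF e] e'e, of "line x y"]
        line_through_props[OF xy] lines[OF e] lines[OF e'] by auto
  qed
  show ?thesis
  proof (cases "line x c = line x c'")
    case True
    obtain L where L: "L \<in> lines_at x" "L \<noteq> line x y" "L \<noteq> line x c"
      using third_line[OF x] by blast
    then obtain e where e: "e \<in> pasch_clique x y \<inter> L"
      using pasch_clique_line_nonempty[OF xy] by (auto simp: lines_at_def)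
    then have "line x e = L" using line_through_eq L lines by (auto simp: lines_at_def)
    then show ?thesis using on_distinct_lines[of c e] on_distinct_lines[of e c'] c c' e L True
      by auto
  qed (use on_distinct_lines c c' in blast)
qed

text \<open>The row through \<open>y\<close> of the grid on the neighbourhood of \<open>x\<close>: besides the Pasch clique
  of \<open>x y\<close> it contains the points of \<open>line x y\<close> that lie in the Pasch clique of \<open>x c\<close>
  for some \<open>c\<close> in it (by \<open>pasch_trace_on_line_indep\<close> the choice of \<open>c\<close> does not matter).\<close>

definition row :: "'a \<Rightarrow> 'a \<Rightarrow> 'a set" where
  "row x y = pasch_clique x y \<union> (\<Union>c\<in>pasch_clique x y. pasch_clique x c \<inter> line x y)"

lemma row_eq:
  "adj x y \<Longrightarrow> c \<in> pasch_clique x y \<Longrightarrow>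
    row x y = pasch_clique x y \<union> (pasch_clique x c \<inter> line x y)"
  unfolding row_def using pasch_trace_on_line_indep by blast

lemma mem_row_self: assumes "adj x y" shows "y \<in> row x y"
proof -
  obtain c where "c \<in> pasch_clique x y" using pasch_clique_nonempty[OF assms] by blast
  then show ?thesis using pasch_clique_sym[OF assms] line_through_props[OF assms] unfolding row_def
    by blast
qed

lemma adj_of_mem_row: "u \<in> row x y \<Longrightarrow> adj x u"
  unfolding row_def by (auto simp: mem_pasch_clique)

lemma row_clique:
  assumes xy: "adj x y" and u: "u \<in> row x y" and v: "v \<in> row x y" and uv: "u \<noteq> v"
  shows "adj u v"
proof -
  have on_line: "w \<in> line x y" if "w \<in> row x y" "w \<notin> pasch_clique x y" for w
    using that unfolding row_def by blast
  consider "u \<in> pasch_clique x y" "v \<in> pasch_clique x y"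
    | "u \<notin> pasch_clique x y" "v \<notin> pasch_clique x y"
    | "u \<in> pasch_clique x y" "v \<notin> pasch_clique x y" | "u \<notin> pasch_clique x y" "v \<in> pasch_clique x y"
    by blast
  then show ?thesis
  proof cases
    case 1
    then show ?thesis using pasch_clique_adj[OF xy] uv by blast
  next
    case 2
    then show ?thesis using on_line u v line_through_props[OF xy] line_adj uv by blast
  next
    case 3
    then have "v \<in> pasch_clique x u" using row_eq[OF xy] v by blast
    then show ?thesis by (simp add: mem_pasch_clique)
  next
    case 4
    then have "u \<in> pasch_clique x v" using row_eq[OF xy] u by blast
    then show ?thesis using adj_sym by (simp add: mem_pasch_clique)
  qed
qed

lemma row_subset_of_pasch:
  assumes xy: "adj x y" and c: "c \<in> pasch_clique x y"
  shows "row x c \<subseteq> row x y"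
proof
  fix u assume u: "u \<in> row x c"
  have xc: "adj x c" using c by (simp add: mem_pasch_clique)
  have "row x c = pasch_clique x c \<union> (pasch_clique x y \<inter> line x c)"
    by (rule row_eq[OF xc pasch_clique_sym[OF xy c]])
  then consider "u \<in> pasch_clique x y" | "u \<in> pasch_clique x c" "u \<notin> pasch_clique x y"
    using u by blast
  then show "u \<in> row x y"
  proof cases
    case 1
    then show ?thesis unfolding row_def by blast
  next
    case 2
    then have xu: "adj x u" and "u \<notin> line x c" by (auto simp: mem_pasch_clique)
    then have ne: "line x u \<noteq> line x c" using line_through_props by blast
    show ?thesis
    proof (cases "line x u = line x y")
      case True
      then show ?thesis using row_eq[OF xy c] 2 line_through_props[OF xu] by auto
    next
      case False
      then have "pasch_clique x c \<inter> line x u = pasch_clique x y \<inter> line x u"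
        using pasch_clique_trace[OF xy c] line_through_props[OF xu] ne by blast
      then show ?thesis using 2 line_through_props[OF xu] by blast
    qed
  qed
qed

lemma row_eq_of_pasch: "adj x y \<Longrightarrow> c \<in> pasch_clique x y \<Longrightarrow> row x c = row x y"
  using row_subset_of_pasch pasch_clique_sym by (metis mem_pasch_clique subset_antisym)

lemma row_eq_of_mem: assumes xy: "adj x y" and u: "u \<in> row x y" shows "row x u = row x y"
proof (cases "u \<in> pasch_clique x y")
  case False
  then obtain c where c: "c \<in> pasch_clique x y" "u \<in> pasch_clique x c"
    using u unfolding row_def by blast
  then have "row x u = row x c" using row_eq_of_pasch by (simp add: mem_pasch_clique)
  then show ?thesis using row_eq_of_pasch[OF xy c(1)] by simp
qed (use row_eq_of_pasch[OF xy] in simp)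

lemma adj_iff_same_line_or_row:
  assumes xu: "adj x u" and xv: "adj x v"
  shows "adj u v \<longleftrightarrow> u \<noteq> v \<and> (line x u = line x v \<or> row x u = row x v)"
proof
  assume uv: "adj u v"
  show "u \<noteq> v \<and> (line x u = line x v \<or> row x u = row x v)"
  proof (cases "line x u = line x v")
    case False
    then have "v \<notin> line x u" using line_through_eq[OF xv] line_through_props[OF xu] by metis
    then have "v \<in> pasch_clique x u" using xv uv adj_in_V by (simp add: mem_pasch_clique)
    then show ?thesis using row_eq_of_pasch[OF xu] uv adj_irrefl by auto
  qed (use uv adj_irrefl in auto)
next
  assume "u \<noteq> v \<and> (line x u = line x v \<or> row x u = row x v)"
  then show "adj u v"
    using line_through_props[OF xu] line_through_props[OF xv] line_adj
      row_clique[OF xv _ mem_row_self[OF xv]] mem_row_self[OF xu] by metis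
qed

lemma card_row_line:
  assumes xy: "adj x y" and L: "L \<in> CC" "x \<in> L"
  shows "real (card (row x y \<inter> L)) = \<alpha>"
proof -
  obtain c where c: "c \<in> pasch_clique x y" using pasch_clique_nonempty[OF xy] by blast
  have xc: "adj x c" and cl: "line x c \<noteq> line x y"
    using c line_through_neq by (auto simp: mem_pasch_clique)
  show ?thesis
  proof (cases "L = line x y")
    case True
    then have "row x y \<inter> L = pasch_clique x c \<inter> line x y"
      using row_eq[OF xy c] by (auto simp: mem_pasch_clique)
    then show ?thesis using card_pasch_clique_line[OF xc] line_through_props[OF xy] cl True by auto
  next
    case False
    have "pasch_clique x c \<inter> line x y \<inter> L = {}"
    proof (rule ccontr)
      assume "pasch_clique x c \<inter> line x y \<inter> L \<noteq> {}"
      then obtain w where w: "w \<in> pasch_clique x c" "w \<in> line x y" "w \<in> L" by blast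
      then have "x \<noteq> w" using adj_irrefl by (auto simp: mem_pasch_clique)
      then have "L = line x y"
        using lines_eq_of_common_points[OF L(1) _ L(2)] line_through_props[OF xy] w
        by blast
      then show False using False by simp
    qed
    then have "row x y \<inter> L = pasch_clique x y \<inter> L" using row_eq[OF xy c] by blast
    then show ?thesis using card_pasch_clique_line[OF xy L False] by simp
  qed
qed

lemma finite_row: "finite (row x y)"
  using adj_of_mem_row adj_in_V finite_V by (meson finite_subset subsetI)

lemma not_mem_row: "x \<notin> row x y"
  using adj_of_mem_row adj_irrefl by blast

lemma clique_insert_row: assumes xy: "adj x y" shows "is_clique V adj (insert x (row x y))"
  unfolding is_clique_def
proof (intro conjI ballI impI)
  show "insert x (row x y) \<subseteq> V" using adj_in_V xy adj_of_mem_row by blast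
  fix u v assume "u \<in> insert x (row x y)" "v \<in> insert x (row x y)" "u \<noteq> v"
  then show "adj u v" using row_clique[OF xy] adj_of_mem_row adj_sym by blast
qed

lemma assembly_two_lines:
  assumes M: "assembly V adj CC M" and x: "x \<in> M"
  shows "\<exists>y\<in>M. \<exists>z\<in>M. adj x y \<and> adj x z \<and> line x y \<noteq> line x z"
proof (rule ccontr)
  assume one_line: "\<not> ?thesis"
  have clique: "is_clique V adj M" and maximal: "\<And>C. is_clique V adj C \<Longrightarrow> M \<subseteq> C \<Longrightarrow> C = M"
    and "M \<notin> CC"
    using M unfolding assembly_def maximal_clique_def by auto
  have xV: "x \<in> V" using clique x unfolding is_clique_def by blast
  obtain y where xy: "adj x y" and y: "M - {x} \<subseteq> line x y"
  proof (cases "M - {x} = {}")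
    case True
    obtain y where "adj x y" using exists_nbr[OF xV] by blast
    with True that show ?thesis by blast
  next
    case False
    then obtain y where y: "y \<in> M" "y \<noteq> x" by blast
    then have xy: "adj x y" using clique_adj[OF clique x] by simp
    have "u \<in> line x y" if "u \<in> M" "u \<noteq> x" for u
    proof -
      have xu: "adj x u" using clique_adj[OF clique x that(1)] that(2) by simp
      then have "line x u = line x y" using one_line xy y(1) that(1) by blast
      then show ?thesis using line_through_props[OF xu] by simp
    qed
    with xy that show ?thesis by blast
  qed
  then have "M \<subseteq> line x y" using line_through_props[OF xy] x by blast
  then have "line x y = M" using maximal line_clique line_through_props[OF xy] by blast
  then show False using \<open>M \<notin> CC\<close> line_through_props[OF xy] by simp
qed

lemma assembly_eq_insert_row:
  assumes M: "assembly V adj CC M" and x: "x \<in> M"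
  shows "\<exists>y. adj x y \<and> M = insert x (row x y)"
proof -
  have clique: "is_clique V adj M" and maximal: "\<And>C. is_clique V adj C \<Longrightarrow> M \<subseteq> C \<Longrightarrow> C = M"
    using M unfolding assembly_def maximal_clique_def by auto
  note adjM = clique_adj[OF clique]
  obtain y z where yz: "y \<in> M" "z \<in> M" "adj x y" "adj x z" "line x y \<noteq> line x z"
    using assembly_two_lines[OF M x] by blast
  have "y \<noteq> z" using yz(5) by auto
  then have row_yz: "row x y = row x z"
    using adj_iff_same_line_or_row[OF yz(3,4)] adjM[OF yz(1,2)] yz(5) by blast
  have "M \<subseteq> insert x (row x y)"
  proof
    fix u assume u: "u \<in> M"
    show "u \<in> insert x (row x y)"
    proof (cases "u = x")
      case False
      then have xu: "adj x u" using adjM[OF x u] by simp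
      have "row x u = row x y"
      proof (cases "line x u = line x y")
        case True
        then have "u \<noteq> z" using yz(5) by auto
        then have "adj u z" using adjM[OF u yz(2)] by simp
        then show ?thesis using adj_iff_same_line_or_row[OF xu yz(4)] row_yz True yz(5) by auto
      next
        case False
        then have "adj u y" using adjM[OF u yz(1)] by auto
        then show ?thesis using adj_iff_same_line_or_row[OF xu yz(3)] False by auto
      qed
      then show ?thesis using mem_row_self[OF xu] by auto
    qed simp
  qed
  then have "insert x (row x y) = M" using maximal clique_insert_row[OF yz(3)] by blast
  then show ?thesis using yz(3) by blast
qed

lemma card_line_inter_assembly:
  assumes L: "L \<in> CC" and M: "assembly V adj CC M" and ne: "L \<inter> M \<noteq> {}"
  shows "real (card (L \<inter> M)) = \<alpha> + 1"
proof -
  obtain x where x: "x \<in> L" "x \<in> M" using ne by blast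
  obtain y where xy: "adj x y" and M_eq: "M = insert x (row x y)"
    using assembly_eq_insert_row[OF M x(2)] by blast
  have "L \<inter> M = insert x (row x y \<inter> L)" using M_eq x by auto
  then have "card (L \<inter> M) = Suc (card (row x y \<inter> L))"
    using finite_row not_mem_row by simp
  then show ?thesis using card_row_line[OF xy L x(1)] by simp
qed

lemma nbrs_in_insert_row:
  assumes wy: "adj w y" and wu: "adj w u" and u: "u \<notin> insert w (row w y)"
  shows "{v \<in> insert w (row w y). adj u v} = insert w (row w y \<inter> line w u)"
proof (intro equalityI subsetI)
  have "row w u \<noteq> row w y" using mem_row_self[OF wu] u by auto
  fix v assume v: "v \<in> {v \<in> insert w (row w y). adj u v}"
  show "v \<in> insert w (row w y \<inter> line w u)"
  proof (cases "v = w")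
    case False
    then have vr: "v \<in> row w y" using v by blast
    then have wv: "adj w v" by (rule adj_of_mem_row)
    have "row w u \<noteq> row w v" using row_eq_of_mem[OF wy vr] \<open>row w u \<noteq> row w y\<close> by simp
    then have "line w u = line w v" using adj_iff_same_line_or_row[OF wu wv] v by blast
    then show ?thesis using vr line_through_props[OF wv] by simp
  qed simp
next
  fix v assume v: "v \<in> insert w (row w y \<inter> line w u)"
  show "v \<in> {v \<in> insert w (row w y). adj u v}"
  proof (cases "v = w")
    case False
    then have "v \<in> row w y" "v \<in> line w u" using v by auto
    moreover have "v \<noteq> u" using \<open>v \<in> row w y\<close> u by blast
    ultimately show ?thesis using line_adj line_through_props[OF wu] by blast
  qed (use wu adj_sym in simp)
qed

lemma nbrs_in_assembly:
  assumes M: "assembly V adj CC M" and u: "u \<notin> M" and "\<exists>w\<in>M. adj u w"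
  shows "real (card {v\<in>M. adj u v}) = \<alpha> + 1 \<and> (\<exists>!L. L \<in> CC \<and> u \<in> L \<and> L \<inter> M \<noteq> {})"
proof -
  obtain w where w: "w \<in> M" "adj u w" using assms(3) by blast
  obtain y where wy: "adj w y" and M_eq: "M = insert w (row w y)"
    using assembly_eq_insert_row[OF M w(1)] by blast
  have wu: "adj w u" using adj_sym w(2) by simp
  have nbrs: "{v\<in>M. adj u v} = insert w (row w y \<inter> line w u)"
    using nbrs_in_insert_row[OF wy wu] u M_eq by simp
  have "card {v\<in>M. adj u v} = Suc (card (row w y \<inter> line w u))"
    unfolding nbrs using finite_row not_mem_row by simp
  then have card: "real (card {v\<in>M. adj u v}) = \<alpha> + 1"
    using card_row_line[OF wy] line_through_props[OF wu] by simp
  have "L = line w u" if "L \<in> CC" "u \<in> L" "v \<in> L" "v \<in> M" for L v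
  proof -
    have "v \<noteq> u" using that u by blast
    then have "v \<in> {v\<in>M. adj u v}" using that(4) line_adj[OF that(1,2,3)] by auto
    then have "v \<in> insert w (row w y \<inter> line w u)" using nbrs by simp
    then have "v \<in> line w u" using line_through_props[OF wu] by auto
    then show ?thesis
      using lines_eq_of_common_points[OF that(1) _ that(2) _ that(3)] line_through_props[OF wu]
        \<open>v \<noteq> u\<close> by blast
  qed
  then have "\<exists>!L. L \<in> CC \<and> u \<in> L \<and> L \<inter> M \<noteq> {}" using line_through_props[OF wu] w(1) by blast
  with card show ?thesis by blast
qed

lemma lines_at_eq_image: "line x ` {y\<in>V. adj x y} = lines_at x"
proof
  show "line x ` {y\<in>V. adj x y} \<subseteq> lines_at x" using line_through_props by (auto simp: lines_at_def)
  show "lines_at x \<subseteq> line x ` {y\<in>V. adj x y}"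
  proof
    fix L assume "L \<in> lines_at x"
    then have L: "L \<in> CC" "x \<in> L" by (auto simp: lines_at_def)
    have "\<not> L \<subseteq> {x}"
    proof
      assume "L \<subseteq> {x}"
      then have "card L \<le> 1" using card_mono[of "{x}" L] by simp
      then show False using line_card[OF L(1)] beta_pos by simp
    qed
    then obtain z where z: "z \<in> L" "z \<noteq> x" by blast
    then have xz: "adj x z" using line_adj L by blast
    then have "line x z = L" using line_through_eq L z by blast
    then show "L \<in> line x ` {y\<in>V. adj x y}" using xz adj_in_V by blast
  qed
qed

lemma row_inter_line:
  assumes "adj x u" "adj x v"
  shows "{w\<in>V. adj x w \<and> row x w = row x u \<and> line x w = line x v} = row x u \<inter> line x v"
proof (intro equalityI subsetI)
  fix w assume "w \<in> {w\<in>V. adj x w \<and> row x w = row x u \<and> line x w = line x v}"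
  then show "w \<in> row x u \<inter> line x v" using mem_row_self line_through_props by fastforce
next
  fix w assume w: "w \<in> row x u \<inter> line x v"
  then have xw: "adj x w" using adj_of_mem_row by blast
  then show "w \<in> {w\<in>V. adj x w \<and> row x w = row x u \<and> line x w = line x v}"
    using w adj_in_V row_eq_of_mem[OF assms(1)] line_through_eq[OF xw]
      line_through_props[OF assms(2)] by auto
qed

lemma local_graph_iso:
  assumes x: "x \<in> V"
  shows "\<exists>s m n :: nat. real s = \<alpha> \<and> real m = \<beta> / \<alpha> \<and> real n = q D \<and>
    graph_iso (local_vertices V adj x) (local_adj V adj x)
      (cext_vertices s (grid_vertices m n)) (cext_adj grid_adj)"
proof -
  define N where "N = {y\<in>V. adj x y}"
  obtain y0 where y0: "adj x y0" using exists_nbr[OF x] by blast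
  define s where "s = card (row x y0 \<inter> line x y0)"
  have s: "real s = \<alpha>" using card_row_line[OF y0] line_through_props[OF y0] by (simp add: s_def)
  have cell: "card {w\<in>N. row x w = row x u \<and> line x w = line x v} = s" if "u \<in> N" "v \<in> N" for u v
  proof -
    have xu: "adj x u" and xv: "adj x v" using that by (auto simp: N_def)
    have "real (card (row x u \<inter> line x v)) = real s"
      using card_row_line[OF xu] line_through_props[OF xv] s by simp
    then show ?thesis using row_inter_line[OF xu xv] by (simp add: N_def conj_assoc)
  qed
  have adj_iff: "local_adj V adj x u v \<longleftrightarrow> u \<noteq> v \<and> (row x u = row x v \<or> line x u = line x v)"
    if "u \<in> N" "v \<in> N" for u v
    using that adj_iff_same_line_or_row[of x u v] unfolding local_adj_def local_vertices_def N_def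
    by auto
  let ?m = "card (row x ` N)" and ?n = "card (line x ` N)"
  have iso: "graph_iso N (local_adj V adj x)
      (cext_vertices s (grid_vertices ?m ?n)) (cext_adj grid_adj)"
    using finite_V adj_iff cell by (intro graph_iso_clique_extension_grid) (auto simp: N_def)
  have n: "real ?n = q D" using lines_at_eq_image card_lines_at[OF x] by (simp add: N_def)
  have "card N = card (cext_vertices s (grid_vertices ?m ?n))"
    using iso unfolding graph_iso_def by (metis bij_betw_same_card)
  then have "real (card N) = real ?m * real ?n * real s"
    by (simp add: cext_vertices_def grid_vertices_def card_cartesian_product)
  moreover have "real (card N) = q D * \<beta>" using degree[OF x] classical_b_0 by (simp add: N_def)
  ultimately have "q D * \<beta> = q D * (real ?m * \<alpha>)" using n s by (simp only: ac_simps)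
  then have m: "real ?m = \<beta> / \<alpha>" using q_pos[OF D_pos] alpha_pos by (simp add: field_simps)
  have "local_vertices V adj x = N" by (simp add: local_vertices_def N_def)
  then show ?thesis using iso s m n by blast
qed

end

theorem theorem24:
  fixes V :: "'a set" and adj :: "'a \<Rightarrow> 'a \<Rightarrow> bool" and \<C> :: "'a set set"
    and D :: nat and b :: int and \<alpha> \<beta> :: real
  assumes drg: "classical_drg V adj D b \<alpha> \<beta>"
    and hb: "b \<ge> 2" and ha1: "real_of_int b - 1 \<ge> \<alpha>" and ha2: "\<alpha> \<ge> 1" and hD: "D \<ge> 3"
    and geom: "geometric V adj \<C>"
    and pasch: "dual_pasch V adj \<C>"
  shows
    "(\<forall>L\<in>\<C>. \<forall>M. assembly V adj \<C> M \<longrightarrow> L \<inter> M \<noteq> {} \<longrightarrow>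
        real (card (L \<inter> M)) = \<alpha> + 1)
   \<and> (\<forall>M u. assembly V adj \<C> M \<longrightarrow> u \<in> V \<longrightarrow> u \<notin> M \<longrightarrow> (\<exists>w\<in>M. adj u w) \<longrightarrow>
        real (card {w\<in>M. adj u w}) = \<alpha> + 1 \<and>
        (\<exists>!L. L \<in> \<C> \<and> u \<in> L \<and> L \<inter> M \<noteq> {}))
   \<and> (\<forall>x\<in>V. \<exists>s m n :: nat. real s = \<alpha> \<and> real m = \<beta> / \<alpha> \<and> real n = qint b D \<and>
        graph_iso (local_vertices V adj x) (local_adj V adj x)
                  (cext_vertices s (grid_vertices m n)) (cext_adj grid_adj))"
proof -
  interpret dual_pasch_geometric V adj D b \<alpha> \<beta> \<C>
    using drg hb ha2 hD geom pasch by unfold_locales auto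
  show ?thesis
  proof (intro conjI)
    show "\<forall>L\<in>\<C>. \<forall>M. assembly V adj \<C> M \<longrightarrow> L \<inter> M \<noteq> {} \<longrightarrow> real (card (L \<inter> M)) = \<alpha> + 1"
      using card_line_inter_assembly by blast
    show "\<forall>M u. assembly V adj \<C> M \<longrightarrow> u \<in> V \<longrightarrow> u \<notin> M \<longrightarrow> (\<exists>w\<in>M. adj u w) \<longrightarrow>
        real (card {w\<in>M. adj u w}) = \<alpha> + 1 \<and> (\<exists>!L. L \<in> \<C> \<and> u \<in> L \<and> L \<inter> M \<noteq> {})"
      using nbrs_in_assembly by blast
    show "\<forall>x\<in>V. \<exists>s m n :: nat. real s = \<alpha> \<and> real m = \<beta> / \<alpha> \<and> real n = qint b D \<and>
        graph_iso (local_vertices V adj x) (local_adj V adj x)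
                  (cext_vertices s (grid_vertices m n)) (cext_adj grid_adj)"
      using local_graph_iso by blast
  qed
qed

end
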